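(* Let $V$ be a vector space over an algebraically closed field $k$, and suppose given: a cubic form $f\in P_3(V)$ of infinite strength; quadratic forms $q_1,\dots,q_r\in P_2(V)$ of infinite collective strength; quadratic forms $q'_1,\dots,q'_s\in P_2(V)$ each of finite strength; and linear forms $\ell_1,\dots,\ell_t\in P_1(V)$. Then for any $a,b_1,\dots,b_r\in k$ there exists $v\in V$ with $f(v)=a$, $q_i(v)=b_i$ for $1\le i\le r$, $q'_i(v)=0$ for $1\le i\le s$, and $\ell_i(v)=0$ for $1\le i\le t$.
   Context: For a $k$-vector space $V$ with basis and dual coordinates $x_i$, $P_n(V)$ is the space of degree-$n$ polynomial functions on $V$: formal, possibly infinite, $k$-linear combinations of degree-$n$ monomials in the $x_i$, evaluable at any $v\in V$. $P(V)=\bigoplus_{n\ge0}P_n(V)$. The strength of a homogeneous $f\in P_n(V)$, $n\ge1$, is the least $s$ with $f=\sum_{i=1}^s g_ih_i$, $g_i,h_i$ homogeneous in $P(V)$ of positive degree less than $n$ ($\infty$ if none exists). A collection of elements of $P(V)$ has infinite collective strength if every nontrivial $k$-linear combination of those members having a common degree has infinite strength. *)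

theory Defs
  imports "HOL-Computational_Algebra.Polynomial" "HOL-Library.Multiset"
begin

(* Vectors of V: finitely supported coordinate functions w.r.t. a basis indexed by 'i.
   Polynomial functions: formal (possibly infinite) k-linear combinations of monomials;
   a monomial in the coordinates x_i is a finite multiset of indices; a polynomial is its
   coefficient function. *)

type_synonym ('i,'k) fpoly = "'i multiset \<Rightarrow> 'k"

definition vec :: "('i \<Rightarrow> 'k::zero) \<Rightarrow> bool" where
  "vec v \<longleftrightarrow> finite {i. v i \<noteq> 0}"

definition hom :: "nat \<Rightarrow> ('i,'k::zero) fpoly \<Rightarrow> bool" where
  "hom n f \<longleftrightarrow> (\<forall>m. f m \<noteq> 0 \<longrightarrow> size m = n)"

definition pmul :: "('i,'k::comm_semiring_1) fpoly \<Rightarrow> ('i,'k) fpoly \<Rightarrow> ('i,'k) fpoly" where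
  "pmul g h = (\<lambda>m. \<Sum>a\<in>{a. a \<subseteq># m}. g a * h (m - a))"

definition peval :: "('i,'k::comm_semiring_1) fpoly \<Rightarrow> ('i \<Rightarrow> 'k) \<Rightarrow> 'k" where
  "peval f v = (\<Sum>m\<in>{m. f m \<noteq> 0 \<and> set_mset m \<subseteq> {i. v i \<noteq> 0}}. f m * (\<Prod>i\<in>#m. v i))"

definition finite_strength :: "nat \<Rightarrow> ('i,'k::comm_semiring_1) fpoly \<Rightarrow> bool" where
  "finite_strength n f \<longleftrightarrow>
     (\<exists>(s::nat) (g::nat \<Rightarrow> ('i,'k) fpoly) h dg dh.
        (\<forall>j<s. 0 < dg j \<and> dg j < n \<and> 0 < dh j \<and> dh j < n \<and> hom (dg j) (g j) \<and> hom (dh j) (h j))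
        \<and> f = (\<lambda>m. \<Sum>j<s. pmul (g j) (h j) m))"

definition infinite_strength :: "nat \<Rightarrow> ('i,'k::comm_semiring_1) fpoly \<Rightarrow> bool" where
  "infinite_strength n f \<longleftrightarrow> \<not> finite_strength n f"

definition infinite_collective_strength :: "nat \<Rightarrow> nat \<Rightarrow> (nat \<Rightarrow> ('i,'k::comm_semiring_1) fpoly) \<Rightarrow> bool" where
  "infinite_collective_strength n r q \<longleftrightarrow>
     (\<forall>c::nat \<Rightarrow> 'k. (\<exists>j<r. c j \<noteq> 0) \<longrightarrow> infinite_strength n (\<lambda>m. \<Sum>j<r. c j * q j m))"

end

(*
  A form of degree at least 2 and infinite strength stays of infinite strength when restricted to
  the common zero set of finitely many linear forms: substituting a linear form L for a variable
  x_i changes it by a multiple of x_i - L.  Over an infinite field it therefore does not vanish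
  identically on such a subspace V'.  Applied to the q_i this gives, inside any such V', vectors on
  which the q_i take prescribed values (induction on r, extracting square roots), and mutually
  orthogonal hyperbolic pairs e_i, h_i of q_i-isotropic vectors with q_j(e_i, h_i) = delta_ij.
  With their help one finds g with q_i(g) = 0 for all i and f(g) <> 0.  Taking u orthogonal to g
  with q_i(u) = b_i, the vector v = s g + u satisfies q_i(v) = b_i for every s, while f(v) is a
  cubic polynomial in s with leading coefficient f(g), which attains the value a.  The linear
  conditions and the q'_j of finite strength, being sums of products of linear forms, vanish on
  a subspace V' of this kind, in which the whole construction takes place.
*)

theory Submission
  imports Defs "HOL-Library.Function_Algebras"
begin

section \<open>Finitely supported vectors and linear functionals\<close>

text \<open>As a simp rule, \<open>plus_fun_apply\<close> would rewrite every sum of functions to a \<open>\<lambda>\<close>-term,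
  hiding \<open>u + w\<close> from the lemmas below.\<close>

declare plus_fun_apply [simp del]

definition scale :: "'k::times \<Rightarrow> ('a \<Rightarrow> 'k) \<Rightarrow> 'a \<Rightarrow> 'k" where
  "scale c u = (\<lambda>x. c * u x)"

lemma scale_apply: "scale c u x = c * u x"
  by (simp add: scale_def)

lemma scale_zero_left [simp]: "scale 0 u = (0 :: 'a \<Rightarrow> 'k::mult_zero)"
  by (simp add: scale_def fun_eq_iff)

lemma sum_fun_apply: "(\<Sum>l\<in>L. X l) x = (\<Sum>l\<in>L. X l x)"
  by (induction L rule: infinite_finite_induct) (auto simp: plus_fun_apply)

definition supp :: "('i \<Rightarrow> 'k::zero) \<Rightarrow> 'i set" where
  "supp v = {i. v i \<noteq> 0}"

lemma vec_iff_finite_supp: "vec v \<longleftrightarrow> finite (supp v)"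
  by (simp add: vec_def supp_def)

lemma supp_add: "supp (u + w :: 'i \<Rightarrow> 'k::monoid_add) \<subseteq> supp u \<union> supp w"
  by (auto simp: supp_def plus_fun_apply)

lemma supp_scale: "supp (scale c (u :: 'i \<Rightarrow> 'k::mult_zero)) \<subseteq> supp u"
  by (auto simp: supp_def scale_apply)

lemma vec_zero [simp]: "vec 0"
  by (simp add: vec_def)

lemma vec_add [simp]: "vec u \<Longrightarrow> vec w \<Longrightarrow> vec (u + w :: 'i \<Rightarrow> 'k::monoid_add)"
  by (meson finite_UnI finite_subset supp_add vec_iff_finite_supp)

lemma vec_scale [simp]: "vec (u :: 'i \<Rightarrow> 'k::mult_zero) \<Longrightarrow> vec (scale c u)"
  by (meson finite_subset supp_scale vec_iff_finite_supp)

lemma vec_sum [simp]: "(\<And>l. l \<in> L \<Longrightarrow> vec (X l)) \<Longrightarrow> vec (\<Sum>l\<in>L. X l :: 'i \<Rightarrow> 'k::comm_monoid_add)"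
  by (induction L rule: infinite_finite_induct) auto

lemma vec_fun_upd [simp]: "vec v \<Longrightarrow> vec (v(i := s))"
  unfolding vec_def by (rule finite_subset[of _ "insert i {j. v j \<noteq> 0}"]) auto

definition unit_vec :: "'i \<Rightarrow> 'i \<Rightarrow> 'k::zero_neq_one" where
  "unit_vec i = (\<lambda>j. if j = i then 1 else 0)"

lemma vec_unit_vec [simp]: "vec (unit_vec i)"
  by (simp add: vec_def unit_vec_def)

lemma vec_eq_sum_unit_vec:
  fixes v :: "'i \<Rightarrow> 'k::comm_semiring_1"
  assumes "finite S" "supp v \<subseteq> S"
  shows "v = (\<Sum>i\<in>S. scale (v i) (unit_vec i))"
proof
  fix j
  have "(\<Sum>i\<in>S. v i * unit_vec i j) = (\<Sum>i\<in>S. if i = j then v i else 0)"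
    by (intro sum.cong) (auto simp: unit_vec_def)
  also have "\<dots> = v j"
    using assms by (auto simp: supp_def)
  finally show "v j = (\<Sum>i\<in>S. scale (v i) (unit_vec i)) j"
    by (simp add: sum_fun_apply scale_apply)
qed

definition linear_functional :: "(('i \<Rightarrow> 'k::comm_ring_1) \<Rightarrow> 'k) \<Rightarrow> bool" where
  "linear_functional \<phi> \<longleftrightarrow>
     (\<forall>u w. vec u \<longrightarrow> vec w \<longrightarrow> \<phi> (u + w) = \<phi> u + \<phi> w) \<and> (\<forall>c u. vec u \<longrightarrow> \<phi> (scale c u) = c * \<phi> u)"

lemma linear_functionalI:
  assumes "\<And>u w. vec u \<Longrightarrow> vec w \<Longrightarrow> \<phi> (u + w) = \<phi> u + \<phi> w"
    and "\<And>c u. vec u \<Longrightarrow> \<phi> (scale c u) = c * \<phi> u"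
  shows "linear_functional \<phi>"
  using assms by (simp add: linear_functional_def)

lemma linear_functional_add:
  "linear_functional \<phi> \<Longrightarrow> vec u \<Longrightarrow> vec w \<Longrightarrow> \<phi> (u + w) = \<phi> u + \<phi> w"
  by (simp add: linear_functional_def)

lemma linear_functional_scale:
  "linear_functional \<phi> \<Longrightarrow> vec u \<Longrightarrow> \<phi> (scale c u) = c * \<phi> u"
  by (simp add: linear_functional_def)

lemma linear_functional_zero: "linear_functional \<phi> \<Longrightarrow> \<phi> 0 = 0"
  by (metis linear_functional_scale mult_zero_left scale_zero_left vec_zero)

lemma linear_functional_sum:
  assumes "linear_functional \<phi>" "\<And>l. l \<in> L \<Longrightarrow> vec (X l)"
  shows "\<phi> (\<Sum>l\<in>L. X l) = (\<Sum>l\<in>L. \<phi> (X l))"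
  using assms(2)
proof (induction L rule: infinite_finite_induct)
  case (insert l L)
  then show ?case
    using assms(1) by (simp add: linear_functional_add)
qed (simp_all add: linear_functional_zero assms(1))

lemma linear_functional_expansion:
  assumes "linear_functional \<phi>" "finite S" "supp v \<subseteq> S"
  shows "\<phi> v = (\<Sum>i\<in>S. v i * \<phi> (unit_vec i))"
proof -
  have "\<phi> v = \<phi> (\<Sum>i\<in>S. scale (v i) (unit_vec i))"
    using vec_eq_sum_unit_vec[OF assms(2,3)] by simp
  also have "\<dots> = (\<Sum>i\<in>S. v i * \<phi> (unit_vec i))"
    using assms(1) by (simp add: linear_functional_sum linear_functional_scale)
  finally show ?thesis .
qed

lemma linear_functional_eq_zero:
  "linear_functional \<phi> \<Longrightarrow> (\<And>i. \<phi> (unit_vec i) = 0) \<Longrightarrow> vec v \<Longrightarrow> \<phi> v = 0"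
  using linear_functional_expansion[of \<phi> "supp v" v] by (simp add: vec_iff_finite_supp)

definition null_space :: "(('i \<Rightarrow> 'k::zero) \<Rightarrow> 'k) set \<Rightarrow> ('i \<Rightarrow> 'k) set" where
  "null_space \<Phi> = {v. vec v \<and> (\<forall>\<phi>\<in>\<Phi>. \<phi> v = 0)}"

definition linear_constraints :: "(('i \<Rightarrow> 'k::comm_ring_1) \<Rightarrow> 'k) set \<Rightarrow> bool" where
  "linear_constraints \<Phi> \<longleftrightarrow> finite \<Phi> \<and> (\<forall>\<phi>\<in>\<Phi>. linear_functional \<phi>)"

lemma null_space_vec: "v \<in> null_space \<Phi> \<Longrightarrow> vec v"
  by (simp add: null_space_def)

lemma null_space_antimono: "\<Phi> \<subseteq> \<Psi> \<Longrightarrow> null_space \<Psi> \<subseteq> null_space \<Phi>"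
  by (auto simp: null_space_def)

lemma null_space_union: "null_space (\<Phi> \<union> \<Psi>) = null_space \<Phi> \<inter> null_space \<Psi>"
  by (auto simp: null_space_def)

lemma zero_in_null_space: "linear_constraints \<Phi> \<Longrightarrow> 0 \<in> null_space \<Phi>"
  by (simp add: null_space_def linear_constraints_def linear_functional_zero)

lemma null_space_add:
  "linear_constraints \<Phi> \<Longrightarrow> u \<in> null_space \<Phi> \<Longrightarrow> w \<in> null_space \<Phi> \<Longrightarrow> u + w \<in> null_space \<Phi>"
  by (auto simp: null_space_def linear_constraints_def linear_functional_add)

lemma null_space_scale:
  "linear_constraints \<Phi> \<Longrightarrow> u \<in> null_space \<Phi> \<Longrightarrow> scale c u \<in> null_space \<Phi>"
  by (auto simp: null_space_def linear_constraints_def linear_functional_scale)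

lemma null_space_sum:
  "linear_constraints \<Phi> \<Longrightarrow> (\<And>l. l \<in> L \<Longrightarrow> X l \<in> null_space \<Phi>) \<Longrightarrow> (\<Sum>l\<in>L. X l) \<in> null_space \<Phi>"
  by (auto simp: null_space_def linear_constraints_def linear_functional_sum intro!: sum.neutral)

lemma linear_constraints_union:
  "linear_constraints \<Phi> \<Longrightarrow> linear_constraints \<Psi> \<Longrightarrow> linear_constraints (\<Phi> \<union> \<Psi>)"
  by (auto simp: linear_constraints_def)

lemma linear_constraints_image:
  "finite A \<Longrightarrow> (\<And>a. a \<in> A \<Longrightarrow> linear_functional (\<phi> a)) \<Longrightarrow> linear_constraints (\<phi> ` A)"
  by (auto simp: linear_constraints_def)

section \<open>Evaluating homogeneous forms\<close>

lemma prod_mset_image_eq_zero: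
  "x \<in># m \<Longrightarrow> v x = 0 \<Longrightarrow> (\<Prod>i\<in>#m. v i) = (0::'k::comm_semiring_1)"
  by (metis image_mset_add_mset mult_zero_left multi_member_split prod_mset.add_mset)

lemma peval_eq_sum:
  fixes F :: "('i,'k::comm_semiring_1) fpoly"
  assumes "hom n F" "finite S" "supp v \<subseteq> S"
  shows "peval F v = (\<Sum>m\<in>multisets_of_size S n. F m * (\<Prod>i\<in>#m. v i))"
  unfolding peval_def
proof (rule sum.mono_neutral_left)
  show "finite (multisets_of_size S n)"
    using assms by auto
  show "{m. F m \<noteq> 0 \<and> set_mset m \<subseteq> {i. v i \<noteq> 0}} \<subseteq> multisets_of_size S n"
    using assms by (auto simp: hom_def multisets_of_size_def supp_def)
  show "\<forall>m\<in>multisets_of_size S n - {m. F m \<noteq> 0 \<and> set_mset m \<subseteq> {i. v i \<noteq> 0}}.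
          F m * (\<Prod>i\<in>#m. v i) = 0"
    by (auto, metis mult_zero_right prod_mset_image_eq_zero)
qed

lemma hom_zero [simp]: "hom n 0"
  by (simp add: hom_def)

lemma hom_add: "hom n F \<Longrightarrow> hom n G \<Longrightarrow> hom n (F + G :: ('i,'k::monoid_add) fpoly)"
  by (simp add: hom_def plus_fun_apply) (metis add.right_neutral)

lemma hom_diff: "hom n F \<Longrightarrow> hom n G \<Longrightarrow> hom n (F - G :: ('i,'k::group_add) fpoly)"
  by (simp add: hom_def) (metis diff_self)

lemma hom_scale: "hom n F \<Longrightarrow> hom n (scale c F :: ('i,'k::mult_zero) fpoly)"
  by (simp add: hom_def scale_apply) (metis mult_zero_right)

lemma hom_sum:
  "(\<And>j. j \<in> I \<Longrightarrow> hom n (q j)) \<Longrightarrow> hom n (\<Sum>j\<in>I. q j :: ('i,'k::comm_monoid_add) fpoly)"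
  by (induction I rule: infinite_finite_induct) (auto simp: hom_add)

lemma finite_submultisets: "finite {x. x \<subseteq># m}"
proof (rule finite_subset)
  show "{x. x \<subseteq># m} \<subseteq> (\<Union>n\<le>size m. multisets_of_size (set_mset m) n)"
    by (auto simp: multisets_of_size_def dest: set_mset_mono size_mset_mono)
qed auto

lemma hom_pmul: "hom a G \<Longrightarrow> hom b H \<Longrightarrow> hom (a + b) (pmul G H)"
  unfolding hom_def pmul_def
proof (intro allI impI)
  fix m assume hG: "\<forall>m. G m \<noteq> 0 \<longrightarrow> size m = a" and hH: "\<forall>m. H m \<noteq> 0 \<longrightarrow> size m = b"
    and "(\<Sum>x\<in>{x. x \<subseteq># m}. G x * H (m - x)) \<noteq> 0"
  then obtain x where "x \<subseteq># m" "G x \<noteq> 0" "H (m - x) \<noteq> 0"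
    by (metis (mono_tags, lifting) mem_Collect_eq mult_not_zero sum.neutral)
  then show "size m = a + b"
    using hG hH by (metis size_union subset_mset.add_diff_inverse)
qed

context
  fixes v :: "'i \<Rightarrow> 'k::comm_semiring_1"
  assumes v: "vec v"
begin

private lemma peval_eq_sum_supp: "hom n F \<Longrightarrow> peval F v = (\<Sum>m\<in>multisets_of_size (supp v) n. F m * (\<Prod>i\<in>#m. v i))"
  using v by (intro peval_eq_sum) (auto simp: vec_iff_finite_supp)

lemma peval_add:
  assumes "hom n F" "hom n G"
  shows "peval (F + G) v = peval F v + peval G v"
  using assms by (simp add: peval_eq_sum_supp[OF hom_add[OF assms]] peval_eq_sum_supp
      plus_fun_apply sum.distrib distrib_right)

lemma peval_scale:
  assumes "hom n F"
  shows "peval (scale c F) v = c * peval F v"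
  using assms by (simp add: peval_eq_sum_supp[OF hom_scale[OF assms]] peval_eq_sum_supp
      scale_apply sum_distrib_left mult.assoc)

lemma peval_sum:
  "finite I \<Longrightarrow> (\<And>j. j \<in> I \<Longrightarrow> hom n (q j)) \<Longrightarrow> peval (\<Sum>j\<in>I. q j) v = (\<Sum>j\<in>I. peval (q j) v)"
proof (induction I rule: finite_induct)
  case (insert j I)
  have "hom n (q j)" "hom n (\<Sum>j\<in>I. q j)"
    using insert.prems by (auto intro: hom_sum)
  then show ?case
    using insert by (simp add: peval_add[of n "q j"])
qed (simp add: peval_def)

end

lemma peval_diff:
  fixes v :: "'i \<Rightarrow> 'k::comm_ring_1"
  assumes "hom n F" "hom n G" "vec v"
  shows "peval (F - G) v = peval F v - peval G v"
proof -
  have S: "finite (supp v)" "supp v \<subseteq> supp v"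
    using assms(3) by (simp_all add: vec_iff_finite_supp)
  show ?thesis
    by (simp add: peval_eq_sum[OF hom_diff[OF assms(1,2)] S] peval_eq_sum[OF assms(1) S]
        peval_eq_sum[OF assms(2) S] sum_subtractf left_diff_distrib)
qed

lemma lin_comb_eq_sum_scale: "(\<lambda>m. \<Sum>j\<in>I. c j * q j m) = (\<Sum>j\<in>I. scale (c j) (q j))"
  by (simp add: fun_eq_iff sum_fun_apply scale_apply)

lemma peval_homogeneous:
  fixes F :: "('i,'k::comm_semiring_1) fpoly"
  assumes "hom n F" "vec u"
  shows "peval F (scale c u) = c ^ n * peval F u"
proof -
  have S: "finite (supp u)" "supp (scale c u) \<subseteq> supp u"
    using assms(2) supp_scale[of c u] by (auto simp: vec_iff_finite_supp)
  have prod_scale: "(\<Prod>i\<in>#m. scale c u i) = c ^ size m * (\<Prod>i\<in>#m. u i)" for m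
    by (induction m) (simp_all add: scale_apply mult_ac)
  have "peval F (scale c u) = (\<Sum>m\<in>multisets_of_size (supp u) n. F m * (\<Prod>i\<in>#m. scale c u i))"
    by (rule peval_eq_sum[OF assms(1) S])
  also have "\<dots> = (\<Sum>m\<in>multisets_of_size (supp u) n. c ^ n * (F m * (\<Prod>i\<in>#m. u i)))"
    by (intro sum.cong refl) (simp add: prod_scale multisets_of_size_def mult_ac)
  also have "\<dots> = c ^ n * peval F u"
    by (simp add: peval_eq_sum[OF assms(1) S(1)] sum_distrib_left)
  finally show ?thesis .
qed

lemma peval_at_zero: "hom (Suc n) (F :: ('i,'k::comm_semiring_1) fpoly) \<Longrightarrow> peval F 0 = 0"
  by (metis mult_zero_left peval_homogeneous power_0_Suc scale_zero_left vec_zero)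

lemma peval_pmul:
  fixes G H :: "('i,'k::comm_semiring_1) fpoly"
  assumes hG: "hom a G" and hH: "hom b H" and v: "vec v"
  shows "peval (pmul G H) v = peval G v * peval H v"
proof -
  define S where "S = supp v"
  have S: "finite S" "supp v \<subseteq> S"
    using v by (simp_all add: S_def vec_iff_finite_supp)
  define M where "M = multisets_of_size S (a + b)"
  have fin_M: "finite M"
    using S by (auto simp: M_def)
  define Split where "Split m = {x. x \<subseteq># m \<and> size x = a}" for m :: "'i multiset"
  have fin_Split: "finite (Split m)" for m
    unfolding Split_def by (rule finite_subset[OF _ finite_submultisets]) auto
  have prod_split: "(\<Prod>i\<in>#x. v i) * (\<Prod>i\<in>#m - x. v i) = (\<Prod>i\<in>#m. v i)" if "x \<subseteq># m" for x m
    using that by (metis image_mset_union prod_mset.union subset_mset.add_diff_inverse)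
  have pmul_eq: "pmul G H m = (\<Sum>x\<in>Split m. G x * H (m - x))" for m
    unfolding pmul_def Split_def
    by (rule sum.mono_neutral_right[OF finite_submultisets]) (use hG in \<open>force simp: hom_def\<close>)+
  have "peval (pmul G H) v = (\<Sum>m\<in>M. pmul G H m * (\<Prod>i\<in>#m. v i))"
    unfolding M_def using hom_pmul[OF hG hH] S by (rule peval_eq_sum)
  also have "\<dots> = (\<Sum>(m, x)\<in>Sigma M Split. G x * H (m - x) * (\<Prod>i\<in>#m. v i))"
    using fin_Split by (simp add: pmul_eq sum_distrib_right sum.Sigma[OF fin_M])
  also have "\<dots> = (\<Sum>(x, y)\<in>multisets_of_size S a \<times> multisets_of_size S b.
                    G x * (\<Prod>i\<in>#x. v i) * (H y * (\<Prod>i\<in>#y. v i)))"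
    by (rule sum.reindex_bij_witness[where i = "\<lambda>(x, y). (x + y, x)" and j = "\<lambda>(m, x). (x, m - x)"])
      (auto simp: Split_def M_def multisets_of_size_def size_Diff_submset prod_split[symmetric] mult_ac
        dest: in_diffD, meson mset_subset_eqD subsetD)
  also have "\<dots> = peval G v * peval H v"
    using hG hH S by (simp add: peval_eq_sum sum_product sum.cartesian_product)
  finally show ?thesis .
qed

section \<open>Linear forms and a distinguished coordinate\<close>

definition linear_form :: "('i \<Rightarrow> 'k) \<Rightarrow> ('i,'k::zero) fpoly" where
  "linear_form r m = (if size m = 1 then r (the_elem (set_mset m)) else 0)"

lemma hom_linear_form: "hom 1 (linear_form r)"
  by (simp add: hom_def linear_form_def)

lemma peval_hom1_eq_sum:
  fixes F :: "('i,'k::comm_semiring_1) fpoly"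
  assumes "hom 1 F" "finite S" "supp v \<subseteq> S"
  shows "peval F v = (\<Sum>i\<in>S. F {#i#} * v i)"
proof -
  have singletons: "multisets_of_size S 1 = (\<lambda>i. {#i#}) ` S"
    by (auto simp: multisets_of_size_def dest!: size_1_singleton_mset[simplified])
  show ?thesis
    using peval_eq_sum[OF assms] unfolding singletons by (simp add: sum.reindex inj_on_def)
qed

lemma peval_linear_form:
  fixes r :: "'i \<Rightarrow> 'k::comm_semiring_1"
  assumes "finite S" "supp v \<subseteq> S"
  shows "peval (linear_form r) v = (\<Sum>i\<in>S. r i * v i)"
  using peval_hom1_eq_sum[OF hom_linear_form assms] by (simp add: linear_form_def)

lemma linear_functional_peval:
  fixes F :: "('i,'k::comm_ring_1) fpoly"
  assumes "hom 1 F"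
  shows "linear_functional (peval F)"
proof (rule linear_functionalI)
  fix u w :: "'i \<Rightarrow> 'k" assume "vec u" "vec w"
  then have S: "finite (supp u \<union> supp w)"
    by (simp add: vec_iff_finite_supp)
  then show "peval F (u + w) = peval F u + peval F w"
    using supp_add[of u w]
    by (simp add: peval_hom1_eq_sum[OF assms S] plus_fun_apply distrib_left sum.distrib)
next
  fix c and u :: "'i \<Rightarrow> 'k" assume "vec u"
  then show "peval F (scale c u) = c * peval F u"
    using peval_homogeneous[OF assms] by simp
qed

lemma peval_linear_form_of_functional:
  assumes "linear_functional \<phi>" "vec v"
  shows "peval (linear_form (\<lambda>i. \<phi> (unit_vec i))) v = \<phi> v"
  using assms by (simp add: peval_linear_form linear_functional_expansion vec_iff_finite_supp mult.commute)

definition coord :: "'i \<Rightarrow> ('i,'k::zero_neq_one) fpoly" where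
  "coord i m = (if m = {#i#} then 1 else 0)"

definition var_free :: "'i \<Rightarrow> ('i,'k::zero) fpoly \<Rightarrow> ('i,'k) fpoly" where
  "var_free i F m = (if i \<in># m then 0 else F m)"

definition var_quot :: "'i \<Rightarrow> ('i,'k) fpoly \<Rightarrow> ('i,'k) fpoly" where
  "var_quot i F m = F (add_mset i m)"

lemma hom_coord: "hom 1 (coord i)"
  by (simp add: hom_def coord_def)

lemma hom_var_free: "hom n F \<Longrightarrow> hom n (var_free i F)"
  by (simp add: hom_def var_free_def)

lemma hom_var_quot: "hom (Suc n) F \<Longrightarrow> hom n (var_quot i F)"
  unfolding hom_def var_quot_def by (metis Suc_inject size_add_mset)

lemma pmul_coord: "pmul (coord i) G m = (if i \<in># m then G (m - {#i#}) else 0)"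
proof -
  have "pmul (coord i) G m = (\<Sum>x\<in>{x. x \<subseteq># m}. if x = {#i#} then G (m - x) else 0)"
    unfolding pmul_def coord_def by (intro sum.cong) auto
  also have "\<dots> = (if i \<in># m then G (m - {#i#}) else 0)"
    by (simp add: sum.delta[OF finite_submultisets])
  finally show ?thesis .
qed

lemma var_split: "var_free i F + pmul (coord i) (var_quot i F) = F"
  by (rule ext) (simp add: plus_fun_apply var_free_def pmul_coord var_quot_def insert_DiffM)

lemma peval_coord:
  assumes "vec v"
  shows "peval (coord i) v = v i"
proof -
  have "peval (coord i) v = (\<Sum>j\<in>insert i (supp v). coord i {#j#} * v j)"
    using assms by (intro peval_hom1_eq_sum hom_coord) (auto simp: vec_iff_finite_supp)
  also have "\<dots> = (\<Sum>j\<in>insert i (supp v). if j = i then v i else 0)"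
    by (intro sum.cong) (auto simp: coord_def)
  finally show ?thesis
    using assms by (simp add: vec_iff_finite_supp)
qed

lemma peval_var_split:
  fixes F :: "('i,'k::comm_ring_1) fpoly"
  assumes "hom (Suc n) F" "vec v"
  shows "peval F v = peval (var_free i F) v + v i * peval (var_quot i F) v"
proof -
  have "hom (Suc n) (pmul (coord i) (var_quot i F))"
    using hom_pmul[OF hom_coord hom_var_quot[OF assms(1)]] by simp
  then have "peval (var_free i F + pmul (coord i) (var_quot i F)) v
      = peval (var_free i F) v + peval (pmul (coord i) (var_quot i F)) v"
    using assms by (intro peval_add hom_var_free)
  then show ?thesis
    using assms by (simp add: var_split peval_pmul[OF hom_coord hom_var_quot] peval_coord)
qed

lemma peval_var_free_fun_upd:
  fixes F :: "('i,'k::comm_semiring_1) fpoly"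
  assumes "hom n F" "vec v"
  shows "peval (var_free i F) (v(i := s)) = peval (var_free i F) v"
proof -
  let ?S = "insert i (supp v)"
  have S: "finite ?S" "supp v \<subseteq> ?S" "supp (v(i := s)) \<subseteq> ?S"
    using assms(2) by (auto simp: vec_iff_finite_supp supp_def)
  have "image_mset (v(i := s)) m = image_mset v m" if "i \<notin># m" for m
    using that by (intro image_mset_cong) auto
  then have "var_free i F m * (\<Prod>j\<in>#m. (v(i := s)) j) = var_free i F m * (\<Prod>j\<in>#m. v j)" for m
    by (cases "i \<in># m") (simp_all add: var_free_def del: fun_upd_apply)
  then show ?thesis
    by (simp add: peval_eq_sum[OF hom_var_free[OF assms(1)] S(1,2)]
        peval_eq_sum[OF hom_var_free[OF assms(1)] S(1,3)])
qed

lemma peval_hom0: "hom 0 F \<Longrightarrow> vec v \<Longrightarrow> peval (F :: ('i,'k::comm_semiring_1) fpoly) v = F {#}"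
  using peval_eq_sum[of 0 F "supp v" v] by (simp add: vec_iff_finite_supp)

lemma peval_fun_upd_is_poly:
  fixes F :: "('i,'k::comm_ring_1) fpoly"
  assumes "hom n F" "vec v"
  shows "\<exists>p. \<forall>s. peval F (v(i := s)) = poly p s"
  using assms(1)
proof (induction n arbitrary: F)
  case 0
  then show ?case
    using assms(2) by (intro exI[of _ "[:F {#}:]"] allI) (simp add: peval_hom0 del: fun_upd_apply)
next
  case (Suc n)
  obtain p where p: "\<And>s. peval (var_quot i F) (v(i := s)) = poly p s"
    using Suc.IH[OF hom_var_quot[OF Suc.prems]] by blast
  have "peval F (v(i := s)) = poly (pCons (peval (var_free i F) v) p) s" for s
    using peval_var_split[OF Suc.prems, of "v(i := s)" i] assms(2) Suc.prems
    by (simp add: p peval_var_free_fun_upd)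
  then show ?case
    by blast
qed

section \<open>Forms vanishing identically over an infinite field\<close>

lemma poly_eq_0_if_roots_cofinite:
  fixes p :: "'k::idom poly"
  assumes "infinite (UNIV :: 'k set)" "\<And>s. s \<noteq> 0 \<Longrightarrow> poly p s = 0"
  shows "p = 0"
proof (rule ccontr)
  assume "p \<noteq> 0"
  then have "finite (insert 0 {s. poly p s = 0})"
    by (simp add: poly_roots_finite)
  moreover have "insert 0 {s. poly p s = 0} = UNIV"
    using assms(2) by auto
  ultimately show False
    using assms(1) by simp
qed

lemma form_eq_0_if_vanishes:
  fixes F :: "('i,'k::idom) fpoly"
  assumes "infinite (UNIV :: 'k set)" "hom n F" "\<And>v. vec v \<Longrightarrow> peval F v = 0"
  shows "F = 0"
  using assms(2,3)
proof (induction n arbitrary: F)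
  case 0
  then have "F {#} = 0"
    using peval_hom0[OF 0(1) vec_zero] 0(2)[OF vec_zero] by simp
  then show ?case
    using 0(1) unfolding fun_eq_iff zero_fun_apply by (metis hom_def size_eq_0_iff_empty)
next
  case (Suc n)
  have "var_quot i F = 0" for i
  proof (rule Suc.IH[OF hom_var_quot[OF Suc.prems(1)]])
    fix w :: "'i \<Rightarrow> 'k" assume w: "vec w"
    obtain p where p: "\<And>s. peval (var_quot i F) (w(i := s)) = poly p s"
      using peval_fun_upd_is_poly[OF hom_var_quot[OF Suc.prems(1)] w] by blast
    have "s * poly p s = 0" for s
      using peval_var_split[OF Suc.prems(1), of "w(i := s)" i] peval_var_split[OF Suc.prems(1), of "w(i := 0)" i]
        Suc.prems(2)[OF vec_fun_upd[OF w, of i s]] Suc.prems(2)[OF vec_fun_upd[OF w, of i 0]] w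
      by (simp add: p peval_var_free_fun_upd[OF Suc.prems(1)])
    then have "p = 0"
      by (intro poly_eq_0_if_roots_cofinite[OF assms(1)]) (metis mult_eq_0_iff)
    then show "peval (var_quot i F) w = 0"
      using p[of "w i"] by simp
  qed
  then show ?case
    using Suc.prems(1) unfolding hom_def fun_eq_iff var_quot_def zero_fun_apply
    by (metis insert_DiffM size_eq_Suc_imp_elem)
qed

lemma infinite_UNIV_alg_closed_field: "infinite (UNIV :: 'k::alg_closed_field set)"
proof
  assume fin: "finite (UNIV :: 'k set)"
  define p :: "'k poly" where "p = (\<Prod>a::'k\<in>UNIV. [:-a, 1:]) + 1"
  have "degree (\<Prod>a::'k\<in>UNIV. [:-a, 1:]) = card (UNIV :: 'k set)"
    by (subst degree_prod_eq_sum_degree) auto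
  then have "degree p > 0"
    using fin by (simp add: p_def degree_add_eq_left card_gt_0_iff)
  then obtain x where "poly p x = 0"
    using alg_closed_imp_poly_has_root by blast
  moreover have "poly (\<Prod>a::'k\<in>UNIV. [:-a, 1:]) x = 0"
    using fin by (simp add: poly_prod prod_zero)
  ultimately show False
    by (simp add: p_def)
qed

section \<open>Strength and restriction to subspaces of finite codimension\<close>

lemma finite_strength_zero: "finite_strength n 0"
  unfolding finite_strength_def by (rule exI[of _ 0]) (simp add: fun_eq_iff)

lemma infinite_strength_nonzero: "infinite_strength n F \<Longrightarrow> F \<noteq> 0"
  using finite_strength_zero by (auto simp: infinite_strength_def)

lemma finite_strength_add_pmul:
  fixes F :: "('i,'k::comm_semiring_1) fpoly"
  assumes "finite_strength n F" "0 < a" "a < n" "0 < b" "b < n" "hom a g" "hom b h"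
  shows "finite_strength n (F + pmul g h)"
proof -
  obtain s :: nat and g' h' :: "nat \<Rightarrow> ('i,'k) fpoly" and dg dh :: "nat \<Rightarrow> nat" where decomp:
    "\<forall>j<s. 0 < dg j \<and> dg j < n \<and> 0 < dh j \<and> dh j < n \<and> hom (dg j) (g' j) \<and> hom (dh j) (h' j)"
    "F = (\<lambda>m. \<Sum>j<s. pmul (g' j) (h' j) m)"
    using assms(1) unfolding finite_strength_def by blast
  have "\<forall>j<Suc s. 0 < (dg(s := a)) j \<and> (dg(s := a)) j < n \<and> 0 < (dh(s := b)) j \<and> (dh(s := b)) j < n
      \<and> hom ((dg(s := a)) j) ((g'(s := g)) j) \<and> hom ((dh(s := b)) j) ((h'(s := h)) j)"
    using decomp(1) assms(2-7) by (auto simp: less_Suc_eq)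
  moreover have "F + pmul g h = (\<lambda>m. \<Sum>j<Suc s. pmul ((g'(s := g)) j) ((h'(s := h)) j) m)"
    by (simp add: decomp(2) plus_fun_apply fun_eq_iff)
  ultimately show ?thesis
    unfolding finite_strength_def by blast
qed

lemma pmul_uminus_left: "pmul (- G) H = - pmul G (H :: ('i,'k::comm_ring_1) fpoly)"
  by (simp add: pmul_def fun_eq_iff sum_negf)

lemma hom_uminus: "hom n F \<Longrightarrow> hom n (- F :: ('i,'k::group_add) fpoly)"
  by (simp add: hom_def)

fun subst_var :: "'i \<Rightarrow> ('i,'k::comm_ring_1) fpoly \<Rightarrow> nat \<Rightarrow> ('i,'k) fpoly \<Rightarrow> ('i,'k) fpoly" where
  "subst_var i L 0 F = F"
| "subst_var i L (Suc n) F = var_free i F + pmul L (subst_var i L n (var_quot i F))"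

lemma hom_subst_var: "hom 1 L \<Longrightarrow> hom n F \<Longrightarrow> hom n (subst_var i L n F)"
proof (induction n arbitrary: F)
  case (Suc n)
  then have "hom (Suc n) (pmul L (subst_var i L n (var_quot i F)))"
    using hom_pmul[of 1 L n] by (simp add: hom_var_quot)
  then show ?case
    using Suc.prems by (simp add: hom_add hom_var_free)
qed simp

lemma peval_subst_var:
  fixes F :: "('i,'k::comm_ring_1) fpoly"
  assumes L: "hom 1 L"
  shows "hom n F \<Longrightarrow> vec v \<Longrightarrow> peval (subst_var i L n F) v = peval F (v(i := peval L v))"
proof (induction n arbitrary: F)
  case 0
  then show ?case
    by (simp add: peval_hom0 del: fun_upd_apply)
next
  case (Suc n)
  let ?t = "peval L v" and ?C = "subst_var i L n (var_quot i F)"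
  have hC: "hom n ?C"
    using hom_subst_var[OF L hom_var_quot[OF Suc.prems(1)]] .
  have hLC: "hom (Suc n) (pmul L ?C)"
    using hom_pmul[OF L hC] by simp
  have "peval (subst_var i L (Suc n) F) v = peval (var_free i F) v + ?t * peval ?C v"
    using peval_add[OF Suc.prems(2) hom_var_free[OF Suc.prems(1)] hLC] peval_pmul[OF L hC Suc.prems(2)]
    by simp
  also have "\<dots> = peval (var_free i F) (v(i := ?t)) + ?t * peval (var_quot i F) (v(i := ?t))"
    using Suc by (simp add: peval_var_free_fun_upd hom_var_quot del: fun_upd_apply)
  also have "\<dots> = peval F (v(i := ?t))"
    using peval_var_split[OF Suc.prems(1) vec_fun_upd[OF Suc.prems(2)], of i ?t i] by simp
  finally show ?case .
qed

text \<open>Substituting a linear form for a variable cannot raise the strength: the difference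
  between a form and its substitution is \<open>(x\<^sub>i - L) \<cdot> C\<close>.\<close>

lemma finite_strength_of_subst_var:
  fixes F :: "('i,'k::comm_ring_1) fpoly"
  assumes L: "hom 1 L" and F: "hom n F" and n: "2 \<le> n"
    and fs: "finite_strength n (subst_var i L n F)"
  shows "finite_strength n F"
proof -
  obtain m where nm: "n = Suc m" and m: "1 \<le> m"
    using n by (cases n) auto
  let ?Q = "var_quot i F"
  let ?C = "subst_var i L m ?Q"
  have hQ: "hom m ?Q" and hC: "hom m ?C"
    using F hom_var_quot[of m F i] hom_subst_var[OF L] nm by auto
  have "finite_strength n (subst_var i L n F + pmul (coord i) ?Q + pmul (- L) ?C)"
    using m nm hQ hC L hom_coord hom_uminus[OF L]
    by (intro finite_strength_add_pmul[where a = 1 and b = m] fs) auto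
  moreover have "subst_var i L n F + pmul (coord i) ?Q + pmul (- L) ?C = F"
    using var_split[of i F] by (simp add: nm pmul_uminus_left fun_eq_iff plus_fun_apply)
  ultimately show ?thesis
    by simp
qed

definition linear_endo :: "(('i \<Rightarrow> 'k) \<Rightarrow> ('i \<Rightarrow> 'k::comm_ring_1)) \<Rightarrow> bool" where
  "linear_endo P \<longleftrightarrow> (\<forall>v. vec v \<longrightarrow> vec (P v))
     \<and> (\<forall>u w. vec u \<longrightarrow> vec w \<longrightarrow> P (u + w) = P u + P w)
     \<and> (\<forall>c u. vec u \<longrightarrow> P (scale c u) = scale c (P u))"

definition pulls_back_infinite_strength :: "(('i \<Rightarrow> 'k) \<Rightarrow> ('i \<Rightarrow> 'k::comm_ring_1)) \<Rightarrow> bool" where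
  "pulls_back_infinite_strength P \<longleftrightarrow>
     (\<forall>n F. 2 \<le> n \<longrightarrow> hom n F \<longrightarrow> infinite_strength n F \<longrightarrow>
        (\<exists>F'. hom n F' \<and> infinite_strength n F' \<and> (\<forall>v. vec v \<longrightarrow> peval F' v = peval F (P v))))"

lemma linear_endo_id: "linear_endo id"
  by (simp add: linear_endo_def)

lemma linear_endo_comp: "linear_endo P \<Longrightarrow> linear_endo Q \<Longrightarrow> linear_endo (P \<circ> Q)"
  by (simp add: linear_endo_def)

lemma pulls_back_infinite_strength_id: "pulls_back_infinite_strength id"
  unfolding pulls_back_infinite_strength_def by auto

lemma pulls_back_infinite_strength_comp:
  fixes P Q :: "('i \<Rightarrow> 'k) \<Rightarrow> ('i \<Rightarrow> 'k::comm_ring_1)"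
  assumes "pulls_back_infinite_strength P" "pulls_back_infinite_strength Q" "linear_endo Q"
  shows "pulls_back_infinite_strength (P \<circ> Q)"
  unfolding pulls_back_infinite_strength_def
proof (intro allI impI)
  fix n and F :: "('i, 'k) fpoly"
  assume F: "2 \<le> n" "hom n F" "infinite_strength n F"
  obtain F' where F': "hom n F'" "infinite_strength n F'" "\<And>v. vec v \<Longrightarrow> peval F' v = peval F (P v)"
    using assms(1) F unfolding pulls_back_infinite_strength_def by blast
  obtain F'' where "hom n F''" "infinite_strength n F''" "\<And>v. vec v \<Longrightarrow> peval F'' v = peval F' (Q v)"
    using assms(2) F(1) F'(1,2) unfolding pulls_back_infinite_strength_def by blast
  then show "\<exists>F''. hom n F'' \<and> infinite_strength n F'' \<and> (\<forall>v. vec v \<longrightarrow> peval F'' v = peval F ((P \<circ> Q) v))"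
    using F'(3) assms(3) by (auto simp: linear_endo_def)
qed

lemma linear_functional_comp:
  "linear_functional \<phi> \<Longrightarrow> linear_endo P \<Longrightarrow> linear_functional (\<phi> \<circ> P)"
  by (simp add: linear_functional_def linear_endo_def)

lemma linear_endo_fun_upd:
  assumes "linear_functional \<psi>"
  shows "linear_endo (\<lambda>v. v(i := \<psi> v))"
  using assms by (auto simp: linear_endo_def linear_functional_def fun_eq_iff plus_fun_apply scale_apply)

lemma pulls_back_infinite_strength_fun_upd:
  fixes \<psi> :: "('i \<Rightarrow> 'k::comm_ring_1) \<Rightarrow> 'k"
  assumes \<psi>: "linear_functional \<psi>"
  shows "pulls_back_infinite_strength (\<lambda>v. v(i := \<psi> v))"
  unfolding pulls_back_infinite_strength_def
proof (intro allI impI)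
  fix n and F :: "('i, 'k) fpoly"
  assume F: "2 \<le> n" "hom n F" "infinite_strength n F"
  define L where "L = linear_form (\<lambda>j. \<psi> (unit_vec j))"
  have L: "hom 1 L" "\<And>v. vec v \<Longrightarrow> peval L v = \<psi> v"
    unfolding L_def using \<psi> by (simp_all only: hom_linear_form peval_linear_form_of_functional)
  show "\<exists>F'. hom n F' \<and> infinite_strength n F' \<and> (\<forall>v. vec v \<longrightarrow> peval F' v = peval F (v(i := \<psi> v)))"
  proof (intro exI conjI allI impI)
    show "hom n (subst_var i L n F)"
      using hom_subst_var[OF L(1) F(2)] .
    show "infinite_strength n (subst_var i L n F)"
      using finite_strength_of_subst_var[OF L(1) F(2,1)] F(3) by (auto simp: infinite_strength_def)
    show "peval (subst_var i L n F) v = peval F (v(i := \<psi> v))" if "vec v" for v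
      using peval_subst_var[OF L(1) F(2) that] L(2)[OF that] by simp
  qed
qed

lemma exists_map_into_hyperplane:
  fixes \<phi> :: "('i \<Rightarrow> 'k::field) \<Rightarrow> 'k"
  assumes \<phi>: "linear_functional \<phi>"
  shows "\<exists>P. linear_endo P \<and> pulls_back_infinite_strength P \<and> (\<forall>v. vec v \<longrightarrow> \<phi> (P v) = 0)"
proof (cases "\<forall>i. \<phi> (unit_vec i) = 0")
  case True
  then show ?thesis
    using linear_functional_eq_zero[OF \<phi>] linear_endo_id pulls_back_infinite_strength_id by fastforce
next
  case False
  then obtain i where c: "\<phi> (unit_vec i) \<noteq> 0"
    by blast
  define \<psi> where "\<psi> v = v i - \<phi> v / \<phi> (unit_vec i)" for v
  have \<psi>: "linear_functional \<psi>"
    using \<phi> by (auto simp: linear_functional_def \<psi>_def plus_fun_apply scale_apply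
        add_divide_distrib right_diff_distrib)
  have "v(i := \<psi> v) = v + scale (- (\<phi> v / \<phi> (unit_vec i))) (unit_vec i)" for v
    by (auto simp: \<psi>_def fun_eq_iff plus_fun_apply scale_apply unit_vec_def)
  then have "\<phi> (v(i := \<psi> v)) = 0" if "vec v" for v
    using \<phi> that c by (simp add: linear_functional_add linear_functional_scale)
  then show ?thesis
    using linear_endo_fun_upd[OF \<psi>] pulls_back_infinite_strength_fun_upd[OF \<psi>] by blast
qed

lemma exists_map_into_null_space:
  fixes \<Phi> :: "(('i \<Rightarrow> 'k::field) \<Rightarrow> 'k) set"
  assumes "linear_constraints \<Phi>"
  shows "\<exists>P. linear_endo P \<and> pulls_back_infinite_strength P \<and> (\<forall>v. vec v \<longrightarrow> P v \<in> null_space \<Phi>)"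
proof -
  have "finite \<Phi>" "\<forall>\<phi>\<in>\<Phi>. linear_functional \<phi>"
    using assms by (auto simp: linear_constraints_def)
  then show ?thesis
  proof (induction \<Phi> rule: finite_induct)
    case empty
    show ?case
    proof (intro exI conjI)
      show "\<forall>v. vec v \<longrightarrow> id v \<in> null_space {}"
        by (simp add: null_space_def)
    qed (fact linear_endo_id pulls_back_infinite_strength_id)+
  next
    case (insert \<phi> \<Phi>)
    obtain P where P: "linear_endo P" "pulls_back_infinite_strength P" "\<And>v. vec v \<Longrightarrow> P v \<in> null_space \<Phi>"
      using insert by auto
    obtain Q where Q: "linear_endo Q" "pulls_back_infinite_strength Q" "\<And>v. vec v \<Longrightarrow> (\<phi> \<circ> P) (Q v) = 0"
      using exists_map_into_hyperplane[OF linear_functional_comp[OF _ P(1)]] insert.prems by blast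
    have "vec v \<Longrightarrow> P (Q v) \<in> null_space (insert \<phi> \<Phi>)" for v
      using P(3) Q(1,3) by (auto simp: null_space_def linear_endo_def)
    then show ?case
      using linear_endo_comp[OF P(1) Q(1)] pulls_back_infinite_strength_comp[OF P(2) Q(2,1)] by auto
  qed
qed

lemma exists_nonvanishing_in_null_space:
  fixes F :: "('i,'k::field) fpoly"
  assumes "infinite (UNIV :: 'k set)" "linear_constraints \<Phi>" "2 \<le> n" "hom n F" "infinite_strength n F"
  shows "\<exists>v\<in>null_space \<Phi>. peval F v \<noteq> 0"
proof -
  obtain P where P: "pulls_back_infinite_strength P" "\<And>v. vec v \<Longrightarrow> P v \<in> null_space \<Phi>"
    using exists_map_into_null_space[OF assms(2)] by blast
  then obtain F' where F': "hom n F'" "infinite_strength n F'" "\<And>v. vec v \<Longrightarrow> peval F' v = peval F (P v)"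
    using assms(3-5) unfolding pulls_back_infinite_strength_def by blast
  obtain v where "vec v" "peval F' v \<noteq> 0"
    using form_eq_0_if_vanishes[OF assms(1) F'(1)] infinite_strength_nonzero[OF F'(2)] by blast
  then show ?thesis
    using P(2) F'(3) by metis
qed

section \<open>Quadratic forms and their polar forms\<close>

definition polar :: "('i,'k::comm_ring_1) fpoly \<Rightarrow> ('i \<Rightarrow> 'k) \<Rightarrow> ('i \<Rightarrow> 'k) \<Rightarrow> 'k" where
  "polar Q u v = peval Q (u + v) - peval Q u - peval Q v"

lemma polar_commute: "polar Q u v = polar Q v u"
  by (simp add: polar_def add.commute)

lemma peval_add_eq_polar: "peval Q (u + v) = peval Q u + peval Q v + polar Q u v"
  by (simp add: polar_def)

lemma peval_scale_quadratic: "hom 2 Q \<Longrightarrow> vec u \<Longrightarrow> peval Q (scale c u) = c\<^sup>2 * peval Q u"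
  by (rule peval_homogeneous)

lemma size_2_mset:
  assumes "size m = 2"
  shows "\<exists>i j. m = {#i, j#}"
proof -
  obtain i m' where "m = m' + {#i#}" "size m' = 1"
    using assms size_eq_Suc_imp_eq_union[of m 1] by auto
  moreover obtain j where "m' = {#j#}"
    using size_1_singleton_mset[OF \<open>size m' = 1\<close>] by blast
  ultimately show ?thesis
    by auto
qed

lemma linear_functional_polar:
  fixes Q :: "('i,'k::comm_ring_1) fpoly"
  assumes Q: "hom 2 Q" and u: "vec u"
  shows "linear_functional (polar Q u)"
proof -
  define b where "b m v = (\<Prod>i\<in>#m. (u + v) i) - (\<Prod>i\<in>#m. u i) - (\<Prod>i\<in>#m. v i)" for m and v :: "'i \<Rightarrow> 'k"
  have polar_eq: "polar Q u v = (\<Sum>m\<in>multisets_of_size S 2. Q m * b m v)"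
    if "finite S" "supp u \<subseteq> S" "supp v \<subseteq> S" for S v
  proof -
    have "supp (u + v) \<subseteq> S"
      using supp_add[of u v] that by auto
    then show ?thesis
      using that by (simp add: polar_def b_def peval_eq_sum[OF Q] sum_subtractf right_diff_distrib)
  qed
  have b_lin: "b m (v + w) = b m v + b m w" "b m (scale c v) = c * b m v"
    if "m \<in> multisets_of_size S 2" for S m v w c
  proof -
    have "size m = 2"
      using that by (simp add: multisets_of_size_def)
    then obtain i j where "m = {#i, j#}"
      using size_2_mset by blast
    then show "b m (v + w) = b m v + b m w" "b m (scale c v) = c * b m v"
      by (simp_all add: b_def plus_fun_apply scale_apply algebra_simps)
  qed
  show ?thesis
  proof (rule linear_functionalI)
    fix v w :: "'i \<Rightarrow> 'k" assume "vec v" "vec w"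
    define S where "S = supp u \<union> supp v \<union> supp w"
    have S: "finite S" "supp u \<subseteq> S" "supp v \<subseteq> S" "supp w \<subseteq> S" "supp (v + w) \<subseteq> S"
      using u \<open>vec v\<close> \<open>vec w\<close> supp_add[of v w] by (auto simp: S_def vec_iff_finite_supp)
    have "polar Q u (v + w) = (\<Sum>m\<in>multisets_of_size S 2. Q m * b m v + Q m * b m w)"
      unfolding polar_eq[OF S(1,2,5)] by (intro sum.cong refl) (simp add: b_lin distrib_left)
    then show "polar Q u (v + w) = polar Q u v + polar Q u w"
      by (simp add: sum.distrib polar_eq[OF S(1,2,3)] polar_eq[OF S(1,2,4)])
  next
    fix c and v :: "'i \<Rightarrow> 'k" assume "vec v"
    define S where "S = supp u \<union> supp v"
    have S: "finite S" "supp u \<subseteq> S" "supp v \<subseteq> S" "supp (scale c v) \<subseteq> S"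
      using u \<open>vec v\<close> supp_scale[of c v] by (auto simp: S_def vec_iff_finite_supp)
    have "polar Q u (scale c v) = (\<Sum>m\<in>multisets_of_size S 2. c * (Q m * b m v))"
      unfolding polar_eq[OF S(1,2,4)] by (intro sum.cong refl) (simp add: b_lin mult.left_commute)
    then show "polar Q u (scale c v) = c * polar Q u v"
      by (simp add: sum_distrib_left polar_eq[OF S(1,2,3)])
  qed
qed

context
  fixes Q :: "('i,'k::comm_ring_1) fpoly"
  assumes Q: "hom 2 Q"
begin

lemma polar_add_right: "vec u \<Longrightarrow> vec v \<Longrightarrow> vec w \<Longrightarrow> polar Q u (v + w) = polar Q u v + polar Q u w"
  using linear_functional_polar[OF Q] by (simp add: linear_functional_add)

lemma polar_add_left: "vec u \<Longrightarrow> vec v \<Longrightarrow> vec w \<Longrightarrow> polar Q (u + v) w = polar Q u w + polar Q v w"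
  using polar_add_right[of w u v] by (simp add: polar_commute[of Q w])

lemma polar_scale_right: "vec u \<Longrightarrow> vec v \<Longrightarrow> polar Q u (scale c v) = c * polar Q u v"
  using linear_functional_polar[OF Q] by (simp add: linear_functional_scale)

lemma polar_scale_left: "vec u \<Longrightarrow> vec v \<Longrightarrow> polar Q (scale c u) v = c * polar Q u v"
  using polar_scale_right[of v u c] by (simp add: polar_commute[of Q v])

lemma polar_sum_right:
  "vec u \<Longrightarrow> (\<And>l. l \<in> L \<Longrightarrow> vec (X l)) \<Longrightarrow> polar Q u (\<Sum>l\<in>L. X l) = (\<Sum>l\<in>L. polar Q u (X l))"
  using linear_functional_polar[OF Q] by (simp add: linear_functional_sum)

lemma polar_sum_left:
  "vec u \<Longrightarrow> (\<And>l. l \<in> L \<Longrightarrow> vec (X l)) \<Longrightarrow> polar Q (\<Sum>l\<in>L. X l) u = (\<Sum>l\<in>L. polar Q (X l) u)"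
  using polar_sum_right[of u L X] by (simp add: polar_commute[of Q u])

lemma peval_sum_orthogonal:
  assumes "finite L" "\<And>l. l \<in> L \<Longrightarrow> vec (X l)"
    and "\<And>l l'. l \<in> L \<Longrightarrow> l' \<in> L \<Longrightarrow> l \<noteq> l' \<Longrightarrow> polar Q (X l) (X l') = 0"
  shows "peval Q (\<Sum>l\<in>L. X l) = (\<Sum>l\<in>L. peval Q (X l))"
  using assms
proof (induction L rule: finite_induct)
  case empty
  have "peval Q 0 = 0"
    using peval_at_zero[of 1 Q] Q by (simp add: numeral_2_eq_2)
  then show ?case
    by (simp add: zero_fun_def)
next
  case (insert l L)
  have "polar Q (X l) (\<Sum>l'\<in>L. X l') = (\<Sum>l'\<in>L. polar Q (X l) (X l'))"
    using insert.prems(1) by (intro polar_sum_right) auto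
  also have "\<dots> = 0"
    using insert.hyps(2) by (intro sum.neutral ballI insert.prems(2)) auto
  finally show ?case
    using insert by (simp add: peval_add_eq_polar)
qed

lemma peval_add_sum_orthogonal:
  assumes "finite L" "vec w" "\<And>l. l \<in> L \<Longrightarrow> vec (u l)"
    and "\<And>l. l \<in> L \<Longrightarrow> polar Q w (u l) = 0"
    and "\<And>l l'. l \<in> L \<Longrightarrow> l' \<in> L \<Longrightarrow> l \<noteq> l' \<Longrightarrow> polar Q (u l) (u l') = 0"
  shows "peval Q (w + (\<Sum>l\<in>L. scale (t l) (u l))) = peval Q w + (\<Sum>l\<in>L. (t l)\<^sup>2 * peval Q (u l))"
proof -
  have "polar Q w (\<Sum>l\<in>L. scale (t l) (u l)) = 0"
    using assms(2-4) by (simp add: polar_sum_right polar_scale_right)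
  moreover have "peval Q (\<Sum>l\<in>L. scale (t l) (u l)) = (\<Sum>l\<in>L. peval Q (scale (t l) (u l)))"
    using assms(1,3,5) by (intro peval_sum_orthogonal) (simp_all add: polar_scale_left polar_scale_right)
  ultimately show ?thesis
    using assms(3) by (simp add: peval_add_eq_polar peval_scale_quadratic[OF Q])
qed

end

lemma peval_unit_vec_quadratic:
  fixes Q :: "('i,'k::comm_semiring_1) fpoly"
  assumes "hom 2 Q"
  shows "peval Q (unit_vec i) = Q {#i, i#}"
proof -
  have "multisets_of_size {i} 2 = {{#i, i#}}"
    by (auto simp: multisets_of_size_def dest!: size_2_mset)
  then show ?thesis
    using peval_eq_sum[OF assms, of "{i}" "unit_vec i"] by (simp add: supp_def unit_vec_def)
qed

lemma sum_square_char_2: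
  fixes f :: "'a \<Rightarrow> 'k::comm_ring_1"
  assumes "(2::'k) = 0"
  shows "(\<Sum>i\<in>S. f i)\<^sup>2 = (\<Sum>i\<in>S. (f i)\<^sup>2)"
proof (induction S rule: infinite_finite_induct)
  case (insert x S)
  have "(f x + (\<Sum>i\<in>S. f i))\<^sup>2 = (f x)\<^sup>2 + (\<Sum>i\<in>S. f i)\<^sup>2 + 2 * f x * (\<Sum>i\<in>S. f i)"
    by (simp add: power2_eq_square algebra_simps)
  then show ?case
    using insert assms by simp
qed simp_all

lemma peval_eq_diagonal_if_polar_vanishes:
  fixes Q :: "('i,'k::comm_ring_1) fpoly"
  assumes Q: "hom 2 Q" and polar0: "\<And>a b. vec a \<Longrightarrow> vec b \<Longrightarrow> polar Q a b = 0" and v: "vec v"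
  shows "peval Q v = (\<Sum>i\<in>supp v. (v i)\<^sup>2 * Q {#i, i#})"
proof -
  have S: "finite (supp v)"
    using v by (simp add: vec_iff_finite_supp)
  have "peval Q v = peval Q (\<Sum>i\<in>supp v. scale (v i) (unit_vec i))"
    using vec_eq_sum_unit_vec[OF S order_refl] by simp
  also have "\<dots> = (\<Sum>i\<in>supp v. peval Q (scale (v i) (unit_vec i)))"
    using S polar0 by (intro peval_sum_orthogonal[OF Q]) auto
  finally show ?thesis
    using Q by (simp add: peval_scale_quadratic peval_unit_vec_quadratic)
qed

lemma double_diagonal_eq_0_if_polar_vanishes:
  fixes Q :: "('i,'k::comm_ring_1) fpoly"
  assumes Q: "hom 2 Q" and polar0: "\<And>a b. vec a \<Longrightarrow> vec b \<Longrightarrow> polar Q a b = 0"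
  shows "2 * Q {#i, i#} = 0"
proof -
  define d where "d = Q {#i, i#}"
  have "4 * d = peval Q (scale 2 (unit_vec i))"
    using peval_scale_quadratic[OF Q vec_unit_vec, of 2 i] by (simp add: peval_unit_vec_quadratic[OF Q] d_def)
  also have "scale 2 (unit_vec i) = unit_vec i + (unit_vec i :: 'i \<Rightarrow> 'k)"
    by (simp add: fun_eq_iff plus_fun_apply scale_apply)
  also have "peval Q (unit_vec i + unit_vec i) = 2 * d"
    using peval_add_eq_polar[of Q "unit_vec i" "unit_vec i"] polar0[OF vec_unit_vec vec_unit_vec]
    by (simp add: peval_unit_vec_quadratic[OF Q] d_def)
  finally have "4 * d = 2 * d" .
  moreover have "2 * d = 4 * d - 2 * d"
    by simp
  ultimately show ?thesis
    by (simp add: d_def)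
qed

text \<open>In characteristic 2 a diagonal quadratic form is the square of the linear form
  \<open>\<Sum>\<^sub>i \<surd>Q(e\<^sub>i) x\<^sub>i\<close>.\<close>

lemma square_linear_form_if_polar_vanishes_char_2:
  fixes Q :: "('i,'k::alg_closed_field) fpoly"
  assumes Q: "hom 2 Q" and polar0: "\<And>a b. vec a \<Longrightarrow> vec b \<Longrightarrow> polar Q a b = 0" and char_2: "(2::'k) = 0"
  shows "\<exists>L. hom 1 L \<and> Q = pmul L L"
proof -
  define r where "r i = (SOME y. y\<^sup>2 = Q {#i, i#})" for i
  have r: "(r i)\<^sup>2 = Q {#i, i#}" for i
    unfolding r_def by (rule someI_ex) (simp add: nth_root_exists)
  define L :: "('i,'k) fpoly" where "L = linear_form r"
  have L: "hom 1 L"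
    unfolding L_def by (rule hom_linear_form)
  have "peval (pmul L L) v = peval Q v" if v: "vec v" for v
  proof -
    have "peval L v = (\<Sum>i\<in>supp v. r i * v i)"
      unfolding L_def using v by (simp add: peval_linear_form vec_iff_finite_supp)
    then have "peval (pmul L L) v = (\<Sum>i\<in>supp v. r i * v i)\<^sup>2"
      using v by (simp add: peval_pmul[OF L L] power2_eq_square)
    also have "\<dots> = peval Q v"
      by (simp add: sum_square_char_2[OF char_2] peval_eq_diagonal_if_polar_vanishes[OF Q polar0 v]
          power_mult_distrib r mult.commute)
    finally show ?thesis .
  qed
  moreover have LL: "hom 2 (pmul L L)"
    using hom_pmul[OF L L] by (simp add: numeral_2_eq_2)
  ultimately have "Q - pmul L L = 0"
    using Q by (intro form_eq_0_if_vanishes[OF infinite_UNIV_alg_closed_field hom_diff])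
      (simp_all add: peval_diff[OF Q LL])
  then show ?thesis
    using L by auto
qed

lemma finite_strength_if_polar_vanishes:
  fixes Q :: "('i,'k::alg_closed_field) fpoly"
  assumes Q: "hom 2 Q" and polar0: "\<And>a b. vec a \<Longrightarrow> vec b \<Longrightarrow> polar Q a b = 0"
  shows "finite_strength 2 Q"
proof (cases "(2::'k) = 0")
  case False
  then have "\<And>v. vec v \<Longrightarrow> peval Q v = 0"
    using double_diagonal_eq_0_if_polar_vanishes[OF Q polar0]
    by (simp add: peval_eq_diagonal_if_polar_vanishes[OF Q polar0])
  then have "Q = 0"
    using form_eq_0_if_vanishes[OF infinite_UNIV_alg_closed_field Q] by blast
  then show ?thesis
    by (simp add: finite_strength_zero)
next
  case True
  then obtain L where "hom 1 L" "Q = pmul L L"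
    using square_linear_form_if_polar_vanishes_char_2[OF Q polar0] by blast
  then show ?thesis
    using finite_strength_add_pmul[OF finite_strength_zero, of 1 2 1 L L] by simp
qed

section \<open>Families of quadratic forms of infinite collective strength\<close>

definition infinite_collective_strength_on ::
    "nat \<Rightarrow> 'a set \<Rightarrow> ('a \<Rightarrow> ('i,'k::comm_semiring_1) fpoly) \<Rightarrow> bool" where
  "infinite_collective_strength_on n I q \<longleftrightarrow>
     (\<forall>c. (\<exists>j\<in>I. c j \<noteq> 0) \<longrightarrow> infinite_strength n (\<Sum>j\<in>I. scale (c j) (q j)))"

lemma infinite_collective_strength_iff_on_lessThan:
  "infinite_collective_strength n r q \<longleftrightarrow> infinite_collective_strength_on n {..<r} q"
  by (simp add: infinite_collective_strength_def infinite_collective_strength_on_def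
      lin_comb_eq_sum_scale Bex_def)

lemma infinite_collective_strength_on_subset:
  fixes q :: "'a \<Rightarrow> ('i,'k::comm_semiring_1) fpoly"
  assumes "infinite_collective_strength_on n I q" "J \<subseteq> I" "finite I"
  shows "infinite_collective_strength_on n J q"
  unfolding infinite_collective_strength_on_def
proof (intro allI impI)
  fix c :: "'a \<Rightarrow> 'k" assume "\<exists>j\<in>J. c j \<noteq> 0"
  moreover define c' :: "'a \<Rightarrow> 'k" where "c' j = (if j \<in> J then c j else 0)" for j
  ultimately have "\<exists>j\<in>I. c' j \<noteq> 0"
    using assms(2) by auto
  moreover have "(\<Sum>j\<in>I. scale (c' j) (q j)) = (\<Sum>j\<in>J. scale (c j) (q j))"
    using assms(2,3) by (simp add: c'_def sum.mono_neutral_right[OF assms(3,2)] if_distrib cong: sum.cong)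
  ultimately show "infinite_strength n (\<Sum>j\<in>J. scale (c j) (q j))"
    using assms(1) unfolding infinite_collective_strength_on_def by metis
qed

lemma infinite_strength_diff_lin_comb:
  fixes q :: "'a \<Rightarrow> ('i,'k::comm_ring_1) fpoly"
  assumes "infinite_collective_strength_on n (insert k J) q" "finite J" "k \<notin> J"
  shows "infinite_strength n (q k - (\<Sum>j\<in>J. scale (\<gamma> j) (q j)))"
proof -
  define c where "c j = (if j = k then 1 else - \<gamma> j)" for j
  have "c j = - \<gamma> j" if "j \<in> J" for j
    using assms(3) that by (auto simp: c_def)
  then have "(\<Sum>j\<in>J. scale (c j) (q j)) = - (\<Sum>j\<in>J. scale (\<gamma> j) (q j))"
    by (simp add: fun_eq_iff sum_fun_apply scale_apply sum_negf cong: sum.cong)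
  moreover have "scale (c k) (q k) = q k"
    by (simp add: c_def fun_eq_iff scale_apply)
  ultimately have "(\<Sum>j\<in>insert k J. scale (c j) (q j)) = q k - (\<Sum>j\<in>J. scale (\<gamma> j) (q j))"
    using assms(2,3) by simp
  moreover have "\<exists>j\<in>insert k J. c j \<noteq> 0"
    by (simp add: c_def)
  ultimately show ?thesis
    using assms(1) unfolding infinite_collective_strength_on_def by metis
qed

lemma hom_diff_lin_comb:
  fixes q :: "'a \<Rightarrow> ('i,'k::comm_ring_1) fpoly"
  shows "hom n (q k) \<Longrightarrow> (\<And>j. j \<in> J \<Longrightarrow> hom n (q j)) \<Longrightarrow> hom n (q k - (\<Sum>j\<in>J. scale (\<gamma> j) (q j)))"
  by (intro hom_diff hom_sum hom_scale) auto

lemma peval_diff_lin_comb: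
  fixes q :: "'a \<Rightarrow> ('i,'k::comm_ring_1) fpoly"
  assumes "finite J" "hom n (q k)" "\<And>j. j \<in> J \<Longrightarrow> hom n (q j)" "vec v"
  shows "peval (q k - (\<Sum>j\<in>J. scale (\<gamma> j) (q j))) v = peval (q k) v - (\<Sum>j\<in>J. \<gamma> j * peval (q j) v)"
proof -
  have "hom n (\<Sum>j\<in>J. scale (\<gamma> j) (q j))"
    using assms(3) by (intro hom_sum hom_scale)
  moreover have "peval (\<Sum>j\<in>J. scale (\<gamma> j) (q j)) v = (\<Sum>j\<in>J. peval (scale (\<gamma> j) (q j)) v)"
    using assms by (intro peval_sum) (auto intro: hom_scale)
  moreover have "(\<Sum>j\<in>J. peval (scale (\<gamma> j) (q j)) v) = (\<Sum>j\<in>J. \<gamma> j * peval (q j) v)"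
    using assms by (intro sum.cong refl peval_scale) auto
  ultimately show ?thesis
    using assms by (simp add: peval_diff)
qed

definition polar_constraints ::
    "('a \<Rightarrow> ('i,'k::comm_ring_1) fpoly) \<Rightarrow> 'a set \<Rightarrow> ('i \<Rightarrow> 'k) set \<Rightarrow> (('i \<Rightarrow> 'k) \<Rightarrow> 'k) set" where
  "polar_constraints q I A = (\<lambda>(i, a). polar (q i) a) ` (I \<times> A)"

lemma linear_constraints_polar_constraints:
  "finite I \<Longrightarrow> finite A \<Longrightarrow> (\<And>i. i \<in> I \<Longrightarrow> hom 2 (q i)) \<Longrightarrow> (\<And>a. a \<in> A \<Longrightarrow> vec a)
    \<Longrightarrow> linear_constraints (polar_constraints q I A)"
  by (auto simp: linear_constraints_def polar_constraints_def intro: linear_functional_polar)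

lemma null_space_polar_constraints:
  "v \<in> null_space (polar_constraints q I A) \<longleftrightarrow> vec v \<and> (\<forall>i\<in>I. \<forall>a\<in>A. polar (q i) a v = 0)"
  by (auto simp: null_space_def polar_constraints_def)

text \<open>The families are chosen one after another, each in the polar complement of the earlier ones.\<close>

lemma exists_polar_orthogonal_family:
  fixes q :: "'a \<Rightarrow> ('i,'k::comm_ring_1) fpoly" and N :: "'j set"
  assumes I: "finite I" "\<And>i. i \<in> I \<Longrightarrow> hom 2 (q i)" and \<Phi>: "linear_constraints \<Phi>"
    and N: "finite N" and L: "finite L"
    and gen: "\<And>l \<Psi>. l \<in> L \<Longrightarrow> linear_constraints \<Psi> \<Longrightarrow> \<Phi> \<subseteq> \<Psi> \<Longrightarrow>
                 \<exists>x. (\<forall>j\<in>N. x j \<in> null_space \<Psi>) \<and> P l x"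
  shows "\<exists>X. \<forall>l\<in>L. (\<forall>j\<in>N. X l j \<in> null_space \<Phi>) \<and> P l (X l)
           \<and> (\<forall>l'\<in>L. l' \<noteq> l \<longrightarrow> (\<forall>i\<in>I. \<forall>j\<in>N. \<forall>j'\<in>N. polar (q i) (X l j) (X l' j') = 0))"
proof -
  have "\<exists>X. \<forall>l\<in>M. (\<forall>j\<in>N. X l j \<in> null_space \<Phi>) \<and> P l (X l)
           \<and> (\<forall>l'\<in>M. l' \<noteq> l \<longrightarrow> (\<forall>i\<in>I. \<forall>j\<in>N. \<forall>j'\<in>N. polar (q i) (X l j) (X l' j') = 0))"
    if "finite M" "M \<subseteq> L" for M
    using that
  proof (induction M rule: finite_subset_induct)
    case (insert l M)
    then obtain X where X: "\<forall>l\<in>M. (\<forall>j\<in>N. X l j \<in> null_space \<Phi>) \<and> P l (X l)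
           \<and> (\<forall>l'\<in>M. l' \<noteq> l \<longrightarrow> (\<forall>i\<in>I. \<forall>j\<in>N. \<forall>j'\<in>N. polar (q i) (X l j) (X l' j') = 0))"
      by blast
    define \<Psi> where "\<Psi> = \<Phi> \<union> polar_constraints q I (\<Union>l'\<in>M. X l' ` N)"
    have "vec (X l' j)" if "l' \<in> M" "j \<in> N" for l' j
      using X that null_space_vec by blast
    then have "linear_constraints \<Psi>"
      unfolding \<Psi>_def using \<Phi> I N insert.hyps(1)
      by (intro linear_constraints_union linear_constraints_polar_constraints) auto
    then obtain x where x: "\<forall>j\<in>N. x j \<in> null_space \<Psi>" "P l x"
      using gen[OF insert.hyps(2)] by (auto simp: \<Psi>_def)
    have x_null: "x j \<in> null_space \<Phi>"
      and x_orth: "\<And>i l' j'. i \<in> I \<Longrightarrow> l' \<in> M \<Longrightarrow> j' \<in> N \<Longrightarrow> polar (q i) (X l' j') (x j) = 0"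
      if "j \<in> N" for j
      using x(1) that by (auto simp: \<Psi>_def null_space_union null_space_polar_constraints)
    then have x_orth': "polar (q i) (x j) (X l' j') = 0" if "i \<in> I" "l' \<in> M" "j \<in> N" "j' \<in> N" for i l' j j'
      using that by (simp add: polar_commute)
    show ?case
      using X x(2) x_null x_orth x_orth' insert.hyps(3) by (intro exI[of _ "X(l := x)"]) auto
  qed simp
  then show ?thesis
    using L by blast
qed

lemma exists_orthogonal_dual_vectors:
  fixes q :: "'a \<Rightarrow> ('i,'k::comm_ring_1) fpoly"
  assumes I: "finite I" "J \<subseteq> I" "\<And>i. i \<in> I \<Longrightarrow> hom 2 (q i)" and \<Phi>: "linear_constraints \<Phi>"
    and surj: "\<And>\<Psi> c. linear_constraints \<Psi> \<Longrightarrow> \<exists>v\<in>null_space \<Psi>. \<forall>i\<in>J. peval (q i) v = c i"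
  shows "\<exists>u. \<forall>l\<in>J. u l \<in> null_space \<Phi> \<and> (\<forall>i\<in>J. peval (q i) (u l) = (if i = l then 1 else 0))
            \<and> (\<forall>l'\<in>J. l' \<noteq> l \<longrightarrow> (\<forall>i\<in>I. polar (q i) (u l) (u l') = 0))"
proof -
  obtain U :: "'a \<Rightarrow> unit \<Rightarrow> 'i \<Rightarrow> 'k" where U: "\<forall>l\<in>J. (\<forall>j\<in>UNIV. U l j \<in> null_space \<Phi>)
      \<and> (\<forall>i\<in>J. peval (q i) (U l ()) = (if i = l then 1 else 0))
      \<and> (\<forall>l'\<in>J. l' \<noteq> l \<longrightarrow> (\<forall>i\<in>I. \<forall>j\<in>UNIV. \<forall>j'\<in>UNIV. polar (q i) (U l j) (U l' j') = 0))"
  proof (atomize_elim, rule exists_polar_orthogonal_family[OF I(1,3) \<Phi> finite_UNIV finite_subset[OF I(2,1)]])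
    fix l and \<Psi> :: "(('i \<Rightarrow> 'k) \<Rightarrow> 'k) set" assume "linear_constraints \<Psi>"
    then obtain v where "v \<in> null_space \<Psi>" "\<forall>i\<in>J. peval (q i) v = (if i = l then 1 else 0)"
      using surj[of \<Psi> "\<lambda>i. if i = l then 1 else 0"] by blast
    then show "\<exists>x. (\<forall>j\<in>UNIV. x j \<in> null_space \<Psi>) \<and> (\<forall>i\<in>J. peval (q i) (x ()) = (if i = l then 1 else 0))"
      by (intro exI[of _ "\<lambda>_. v"]) simp
  qed
  then show ?thesis
    by (intro exI[of _ "\<lambda>l. U l ()"]) simp
qed

text \<open>Choosing \<open>t\<^sub>l\<^sup>2 = - q\<^sub>l(w)\<close> makes \<open>w + \<Sum>\<^sub>l t\<^sub>l u\<^sub>l\<close> isotropic for all \<open>q\<^sub>l\<close>, \<open>l \<in> J\<close>.\<close>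

lemma exists_isotropic_adjustment:
  fixes q :: "'a \<Rightarrow> ('i,'k::alg_closed_field) fpoly"
  assumes J: "finite J" and hom: "\<And>i. i \<in> insert k J \<Longrightarrow> hom 2 (q i)"
    and vecs: "vec w" "\<And>l. l \<in> J \<Longrightarrow> vec (u l)"
    and u: "\<And>i l. i \<in> J \<Longrightarrow> l \<in> J \<Longrightarrow> peval (q i) (u l) = (if i = l then 1 else 0)"
      "\<And>i l l'. i \<in> insert k J \<Longrightarrow> l \<in> J \<Longrightarrow> l' \<in> J \<Longrightarrow> l \<noteq> l' \<Longrightarrow> polar (q i) (u l) (u l') = 0"
    and w: "\<And>i l. i \<in> insert k J \<Longrightarrow> l \<in> J \<Longrightarrow> polar (q i) w (u l) = 0"
  shows "\<exists>t. (\<forall>j\<in>J. peval (q j) (w + (\<Sum>l\<in>J. scale (t l) (u l))) = 0)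
           \<and> peval (q k) (w + (\<Sum>l\<in>J. scale (t l) (u l))) = peval (q k) w - (\<Sum>l\<in>J. peval (q k) (u l) * peval (q l) w)"
proof -
  define t where "t l = (SOME y. y\<^sup>2 = - peval (q l) w)" for l
  have t: "(t l)\<^sup>2 = - peval (q l) w" for l
    unfolding t_def by (rule someI_ex) (simp add: nth_root_exists)
  have val: "peval (q i) (w + (\<Sum>l\<in>J. scale (t l) (u l)))
      = peval (q i) w - (\<Sum>l\<in>J. peval (q l) w * peval (q i) (u l))" if "i \<in> insert k J" for i
    using peval_add_sum_orthogonal[OF hom[OF that] J vecs, where t = t] w u(2) that by (simp add: t sum_negf)
  have "peval (q j) (w + (\<Sum>l\<in>J. scale (t l) (u l))) = 0" if "j \<in> J" for j
  proof -
    have "(\<Sum>l\<in>J. peval (q l) w * peval (q j) (u l)) = (\<Sum>l\<in>J. if l = j then peval (q j) w else 0)"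
      using that u(1) by (intro sum.cong) auto
    then show ?thesis
      using val[of j] that J by simp
  qed
  then show ?thesis
    using val[of k] by (intro exI[of _ t]) (simp add: mult.commute)
qed

text \<open>The adjusted vector has \<open>q\<^sub>k\<close>-value \<open>Q(w)\<close> for \<open>Q = q\<^sub>k - \<Sum>\<^sub>l q\<^sub>k(u\<^sub>l) q\<^sub>l\<close>, a form of infinite
  strength, so a suitable \<open>w\<close> makes it nonzero.\<close>

lemma exists_vector_separating_quadratic:
  fixes q :: "'a \<Rightarrow> ('i,'k::alg_closed_field) fpoly"
  assumes J: "finite J" "k \<notin> J" and ics: "infinite_collective_strength_on 2 (insert k J) q"
    and hom: "\<And>i. i \<in> insert k J \<Longrightarrow> hom 2 (q i)" and \<Phi>: "linear_constraints \<Phi>"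
    and surj: "\<And>\<Psi> c. linear_constraints \<Psi> \<Longrightarrow> \<exists>v\<in>null_space \<Psi>. \<forall>i\<in>J. peval (q i) v = c i"
  shows "\<exists>g\<in>null_space \<Phi>. (\<forall>j\<in>J. peval (q j) g = 0) \<and> peval (q k) g \<noteq> 0"
proof -
  let ?I = "insert k J"
  have "\<exists>u. \<forall>l\<in>J. u l \<in> null_space \<Phi> \<and> (\<forall>i\<in>J. peval (q i) (u l) = (if i = l then 1 else 0))
      \<and> (\<forall>l'\<in>J. l' \<noteq> l \<longrightarrow> (\<forall>i\<in>?I. polar (q i) (u l) (u l') = 0))"
    using J(1) hom \<Phi> surj by (intro exists_orthogonal_dual_vectors) auto
  then obtain u where "\<forall>l\<in>J. u l \<in> null_space \<Phi> \<and> (\<forall>i\<in>J. peval (q i) (u l) = (if i = l then 1 else 0))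
      \<and> (\<forall>l'\<in>J. l' \<noteq> l \<longrightarrow> (\<forall>i\<in>?I. polar (q i) (u l) (u l') = 0))"
    by blast
  then have u: "\<And>l. l \<in> J \<Longrightarrow> u l \<in> null_space \<Phi>"
    "\<And>i l. i \<in> J \<Longrightarrow> l \<in> J \<Longrightarrow> peval (q i) (u l) = (if i = l then 1 else 0)"
    "\<And>i l l'. i \<in> ?I \<Longrightarrow> l \<in> J \<Longrightarrow> l' \<in> J \<Longrightarrow> l \<noteq> l' \<Longrightarrow> polar (q i) (u l) (u l') = 0"
    by auto
  have u_vec: "l \<in> J \<Longrightarrow> vec (u l)" for l
    using u(1) null_space_vec by blast
  define Q where "Q = q k - (\<Sum>j\<in>J. scale (peval (q k) (u j)) (q j))"
  have "hom 2 Q" "infinite_strength 2 Q"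
    unfolding Q_def using hom ics J by (auto intro: hom_diff_lin_comb infinite_strength_diff_lin_comb)
  moreover have "linear_constraints (\<Phi> \<union> polar_constraints q ?I (u ` J))"
    using \<Phi> J hom u_vec by (intro linear_constraints_union linear_constraints_polar_constraints) auto
  ultimately obtain w where w: "w \<in> null_space (\<Phi> \<union> polar_constraints q ?I (u ` J))" "peval Q w \<noteq> 0"
    using exists_nonvanishing_in_null_space[OF infinite_UNIV_alg_closed_field] by (metis order_refl)
  have w_vec: "vec w" and w_orth: "\<And>i l. i \<in> ?I \<Longrightarrow> l \<in> J \<Longrightarrow> polar (q i) w (u l) = 0"
    using w(1) by (auto simp: null_space_union null_space_polar_constraints polar_commute)
  obtain t where t: "\<forall>j\<in>J. peval (q j) (w + (\<Sum>l\<in>J. scale (t l) (u l))) = 0"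
    "peval (q k) (w + (\<Sum>l\<in>J. scale (t l) (u l))) = peval (q k) w - (\<Sum>l\<in>J. peval (q k) (u l) * peval (q l) w)"
    using exists_isotropic_adjustment[OF J(1) hom w_vec u_vec u(2,3) w_orth] by blast
  have "peval Q w = peval (q k) w - (\<Sum>j\<in>J. peval (q k) (u j) * peval (q j) w)"
    unfolding Q_def using J hom w_vec by (intro peval_diff_lin_comb) auto
  moreover have "w + (\<Sum>l\<in>J. scale (t l) (u l)) \<in> null_space \<Phi>"
    using w(1) \<Phi> u(1) by (intro null_space_add null_space_sum null_space_scale) (auto simp: null_space_union)
  ultimately show ?thesis
    using t w(2) by auto
qed

theorem exists_quadratic_values_in_null_space:
  fixes q :: "'a \<Rightarrow> ('i,'k::alg_closed_field) fpoly"
  assumes "finite I" "infinite_collective_strength_on 2 I q" "\<And>i. i \<in> I \<Longrightarrow> hom 2 (q i)"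
    and "linear_constraints \<Phi>"
  shows "\<exists>v\<in>null_space \<Phi>. \<forall>i\<in>I. peval (q i) v = b i"
  using assms
proof (induction I arbitrary: \<Phi> b rule: finite_induct)
  case empty
  then show ?case
    using zero_in_null_space by blast
next
  case (insert k J)
  have surj: "\<exists>v\<in>null_space \<Psi>. \<forall>i\<in>J. peval (q i) v = c i" if "linear_constraints \<Psi>" for \<Psi> c
    using insert infinite_collective_strength_on_subset[OF insert.prems(1)] that by blast
  obtain g where g: "g \<in> null_space \<Phi>" "\<And>j. j \<in> J \<Longrightarrow> peval (q j) g = 0" "peval (q k) g \<noteq> 0"
    using exists_vector_separating_quadratic[OF insert.hyps insert.prems] surj by blast
  have "linear_constraints (\<Phi> \<union> polar_constraints q (insert k J) {g})"
    using insert g(1) by (intro linear_constraints_union linear_constraints_polar_constraints)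
      (auto intro: null_space_vec)
  then obtain v' where v': "v' \<in> null_space (\<Phi> \<union> polar_constraints q (insert k J) {g})"
    "\<And>i. i \<in> J \<Longrightarrow> peval (q i) v' = b i"
    using surj by blast
  define s where "s = (SOME y. y\<^sup>2 = (b k - peval (q k) v') / peval (q k) g)"
  have s: "s\<^sup>2 = (b k - peval (q k) v') / peval (q k) g"
    unfolding s_def by (rule someI_ex) (simp add: nth_root_exists)
  have val: "peval (q i) (v' + scale s g) = peval (q i) v' + s\<^sup>2 * peval (q i) g" if "i \<in> insert k J" for i
  proof -
    have "polar (q i) v' g = 0" "vec v'" "vec g"
      using v'(1) g(1) that by (auto simp: null_space_union null_space_polar_constraints polar_commute[of _ g]
          intro: null_space_vec)
    then show ?thesis
      using insert.prems(2)[OF that] by (simp add: peval_add_eq_polar polar_scale_right peval_scale_quadratic)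
  qed
  show ?case
  proof (intro bexI ballI)
    show "v' + scale s g \<in> null_space \<Phi>"
      using v'(1) g(1) insert.prems(3) by (intro null_space_add null_space_scale) (auto simp: null_space_union)
    show "peval (q i) (v' + scale s g) = b i" if "i \<in> insert k J" for i
      using val[OF that] v'(2) g(2,3) s that by auto
  qed
qed

lemma polar_add_sum_orthogonal:
  fixes Q :: "('i,'k::comm_ring_1) fpoly"
  assumes Q: "hom 2 Q" and L: "finite L" and vecs: "vec a" "vec b" "\<And>l. l \<in> L \<Longrightarrow> vec (A l)" "\<And>l. l \<in> L \<Longrightarrow> vec (B l)"
    and orth: "\<And>l. l \<in> L \<Longrightarrow> polar Q a (B l) = 0" "\<And>l. l \<in> L \<Longrightarrow> polar Q (A l) b = 0"
      "\<And>l l'. l \<in> L \<Longrightarrow> l' \<in> L \<Longrightarrow> l \<noteq> l' \<Longrightarrow> polar Q (A l) (B l') = 0"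
  shows "polar Q (a + (\<Sum>l\<in>L. A l)) (b + (\<Sum>l\<in>L. scale (s l) (B l)))
           = polar Q a b + (\<Sum>l\<in>L. s l * polar Q (A l) (B l))"
proof -
  have cross: "polar Q (\<Sum>l\<in>L. A l) (scale (s l') (B l')) = s l' * polar Q (A l') (B l')" if "l' \<in> L" for l'
  proof -
    have "polar Q (\<Sum>l\<in>L. A l) (B l') = (\<Sum>l\<in>L. if l = l' then polar Q (A l') (B l') else 0)"
      using vecs orth(3) that by (auto simp: polar_sum_left[OF Q] intro: sum.cong)
    then show ?thesis
      using vecs L that by (simp add: polar_scale_right[OF Q])
  qed
  show ?thesis
    using vecs orth(1,2) cross
    by (simp add: polar_add_left[OF Q] polar_add_right[OF Q] polar_sum_left[OF Q] polar_sum_right[OF Q]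
        polar_scale_right[OF Q])
qed

lemma polar_diff_lin_comb:
  fixes q :: "'a \<Rightarrow> ('i,'k::comm_ring_1) fpoly"
  assumes "finite J" "hom 2 (q k)" "\<And>j. j \<in> J \<Longrightarrow> hom 2 (q j)" "vec u" "vec v"
  shows "polar (q k - (\<Sum>j\<in>J. scale (\<gamma> j) (q j))) u v = polar (q k) u v - (\<Sum>j\<in>J. \<gamma> j * polar (q j) u v)"
  using assms by (simp add: polar_def peval_diff_lin_comb sum_subtractf sum.distrib right_diff_distrib algebra_simps)

lemma exists_polar_nonzero_in_null_space:
  fixes Q :: "('i,'k::alg_closed_field) fpoly"
  assumes \<Phi>: "linear_constraints \<Phi>" and Q: "hom 2 Q" "infinite_strength 2 Q"
  shows "\<exists>a\<in>null_space \<Phi>. \<exists>b\<in>null_space \<Phi>. polar Q a b \<noteq> 0"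
proof -
  obtain P where P: "linear_endo P" "pulls_back_infinite_strength P" "\<And>v. vec v \<Longrightarrow> P v \<in> null_space \<Phi>"
    using exists_map_into_null_space[OF \<Phi>] by blast
  then obtain Q' where Q': "hom 2 Q'" "infinite_strength 2 Q'" "\<And>v. vec v \<Longrightarrow> peval Q' v = peval Q (P v)"
    using Q unfolding pulls_back_infinite_strength_def by blast
  obtain a b where ab: "vec a" "vec b" "polar Q' a b \<noteq> 0"
    using finite_strength_if_polar_vanishes[OF Q'(1)] Q'(2) by (auto simp: infinite_strength_def)
  have "polar Q (P a) (P b) = polar Q' a b"
    using ab P(1) Q'(3) by (simp add: polar_def linear_endo_def)
  then show ?thesis
    using ab P(3) by metis
qed

section \<open>Hyperbolic pairs\<close>

lemma exists_orthogonal_dual_pairs: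
  fixes q :: "'a \<Rightarrow> ('i,'k::comm_ring_1) fpoly"
  assumes I: "finite I" "J \<subseteq> I" "\<And>i. i \<in> I \<Longrightarrow> hom 2 (q i)" and \<Phi>: "linear_constraints \<Phi>"
    and dual: "\<And>\<Psi> l. linear_constraints \<Psi> \<Longrightarrow> l \<in> J \<Longrightarrow>
       \<exists>a\<in>null_space \<Psi>. \<exists>b\<in>null_space \<Psi>. \<forall>i\<in>J. polar (q i) a b = (if i = l then 1 else 0)"
  shows "\<exists>A B. \<forall>l\<in>J. A l \<in> null_space \<Phi> \<and> B l \<in> null_space \<Phi>
            \<and> (\<forall>i\<in>J. polar (q i) (A l) (B l) = (if i = l then 1 else 0))
            \<and> (\<forall>l'\<in>J. l' \<noteq> l \<longrightarrow> (\<forall>i\<in>I. polar (q i) (A l) (B l') = 0))"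
proof -
  obtain X :: "'a \<Rightarrow> bool \<Rightarrow> 'i \<Rightarrow> 'k" where X: "\<forall>l\<in>J. (\<forall>j\<in>UNIV. X l j \<in> null_space \<Phi>)
      \<and> (\<forall>i\<in>J. polar (q i) (X l True) (X l False) = (if i = l then 1 else 0))
      \<and> (\<forall>l'\<in>J. l' \<noteq> l \<longrightarrow> (\<forall>i\<in>I. \<forall>j\<in>UNIV. \<forall>j'\<in>UNIV. polar (q i) (X l j) (X l' j') = 0))"
  proof (atomize_elim, rule exists_polar_orthogonal_family[OF I(1,3) \<Phi> finite_UNIV finite_subset[OF I(2,1)]])
    fix l and \<Psi> :: "(('i \<Rightarrow> 'k) \<Rightarrow> 'k) set" assume "l \<in> J" "linear_constraints \<Psi>"
    then obtain a b where "a \<in> null_space \<Psi>" "b \<in> null_space \<Psi>" "\<forall>i\<in>J. polar (q i) a b = (if i = l then 1 else 0)"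
      using dual by blast
    then show "\<exists>x. (\<forall>j\<in>UNIV. x j \<in> null_space \<Psi>) \<and> (\<forall>i\<in>J. polar (q i) (x True) (x False) = (if i = l then 1 else 0))"
      by (intro exI[of _ "\<lambda>j. if j then a else b"]) simp
  qed
  then show ?thesis
    by (intro exI[of _ "\<lambda>l. X l True"] exI[of _ "\<lambda>l. X l False"]) simp
qed

text \<open>With \<open>a, b\<close> orthogonal to the pairs \<open>(A\<^sub>l, B\<^sub>l)\<close> and \<open>Q(a, b) = 1\<close> for
  \<open>Q = q\<^sub>k - \<Sum>\<^sub>l q\<^sub>k(A\<^sub>l, B\<^sub>l) q\<^sub>l\<close>, the correction \<open>a + \<Sum>\<^sub>l A\<^sub>l\<close>, \<open>b - \<Sum>\<^sub>l q\<^sub>l(a, b) B\<^sub>l\<close> removes the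
  pairings with all \<open>q\<^sub>l\<close>, \<open>l \<in> J\<close>, and leaves \<open>Q(a, b) = 1\<close> as the pairing with \<open>q\<^sub>k\<close>.\<close>

lemma polar_dual_pair_correction:
  fixes q :: "'a \<Rightarrow> ('i,'k::comm_ring_1) fpoly"
  assumes J: "finite J" "k \<notin> J" and hom: "\<And>i. i \<in> insert k J \<Longrightarrow> hom 2 (q i)"
    and vecs: "vec a" "vec b" "\<And>l. l \<in> J \<Longrightarrow> vec (A l)" "\<And>l. l \<in> J \<Longrightarrow> vec (B l)"
    and AB: "\<And>i l. i \<in> J \<Longrightarrow> l \<in> J \<Longrightarrow> polar (q i) (A l) (B l) = (if i = l then 1 else 0)"
      "\<And>i l l'. i \<in> insert k J \<Longrightarrow> l \<in> J \<Longrightarrow> l' \<in> J \<Longrightarrow> l \<noteq> l' \<Longrightarrow> polar (q i) (A l) (B l') = 0"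
    and orth: "\<And>i l. i \<in> insert k J \<Longrightarrow> l \<in> J \<Longrightarrow> polar (q i) a (B l) = 0"
      "\<And>i l. i \<in> insert k J \<Longrightarrow> l \<in> J \<Longrightarrow> polar (q i) (A l) b = 0"
    and normalized: "polar (q k - (\<Sum>j\<in>J. scale (polar (q k) (A j) (B j)) (q j))) a b = 1"
  shows "\<forall>i\<in>insert k J. polar (q i) (a + (\<Sum>l\<in>J. A l)) (b + (\<Sum>l\<in>J. scale (- polar (q l) a b) (B l)))
           = (if i = k then 1 else 0)"
proof
  fix i assume i: "i \<in> insert k J"
  have pairing: "polar (q i) (a + (\<Sum>l\<in>J. A l)) (b + (\<Sum>l\<in>J. scale (- polar (q l) a b) (B l)))
      = polar (q i) a b - (\<Sum>l\<in>J. polar (q l) a b * polar (q i) (A l) (B l))"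
    using polar_add_sum_orthogonal[OF hom[OF i] J(1) vecs] orth AB(2) i by (simp add: sum_negf)
  show "polar (q i) (a + (\<Sum>l\<in>J. A l)) (b + (\<Sum>l\<in>J. scale (- polar (q l) a b) (B l)))
      = (if i = k then 1 else 0)"
  proof (cases "i = k")
    case True
    have "polar (q k - (\<Sum>j\<in>J. scale (polar (q k) (A j) (B j)) (q j))) a b
        = polar (q k) a b - (\<Sum>j\<in>J. polar (q k) (A j) (B j) * polar (q j) a b)"
      using J hom vecs by (intro polar_diff_lin_comb) auto
    then show ?thesis
      using pairing normalized True by (simp add: mult.commute)
  next
    case False
    then have "i \<in> J"
      using i by simp
    then have "(\<Sum>l\<in>J. polar (q l) a b * polar (q i) (A l) (B l)) = (\<Sum>l\<in>J. if l = i then polar (q i) a b else 0)"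
      using AB(1) by (intro sum.cong) auto
    then show ?thesis
      using pairing False \<open>i \<in> J\<close> J(1) by simp
  qed
qed

lemma exists_dual_pair_step:
  fixes q :: "'a \<Rightarrow> ('i,'k::alg_closed_field) fpoly"
  assumes J: "finite J" "k \<notin> J" and ics: "infinite_collective_strength_on 2 (insert k J) q"
    and hom: "\<And>i. i \<in> insert k J \<Longrightarrow> hom 2 (q i)" and \<Phi>: "linear_constraints \<Phi>"
    and dual: "\<And>\<Psi> l. linear_constraints \<Psi> \<Longrightarrow> l \<in> J \<Longrightarrow>
       \<exists>a\<in>null_space \<Psi>. \<exists>b\<in>null_space \<Psi>. \<forall>i\<in>J. polar (q i) a b = (if i = l then 1 else 0)"
  shows "\<exists>a\<in>null_space \<Phi>. \<exists>b\<in>null_space \<Phi>. \<forall>i\<in>insert k J. polar (q i) a b = (if i = k then 1 else 0)"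
proof -
  let ?I = "insert k J"
  have "\<exists>A B. \<forall>l\<in>J. A l \<in> null_space \<Phi> \<and> B l \<in> null_space \<Phi>
      \<and> (\<forall>i\<in>J. polar (q i) (A l) (B l) = (if i = l then 1 else 0))
      \<and> (\<forall>l'\<in>J. l' \<noteq> l \<longrightarrow> (\<forall>i\<in>?I. polar (q i) (A l) (B l') = 0))"
    using J(1) hom \<Phi> dual by (intro exists_orthogonal_dual_pairs) auto
  then obtain A B where "\<forall>l\<in>J. A l \<in> null_space \<Phi> \<and> B l \<in> null_space \<Phi>
      \<and> (\<forall>i\<in>J. polar (q i) (A l) (B l) = (if i = l then 1 else 0))
      \<and> (\<forall>l'\<in>J. l' \<noteq> l \<longrightarrow> (\<forall>i\<in>?I. polar (q i) (A l) (B l') = 0))"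
    by blast
  then have AB: "\<And>l. l \<in> J \<Longrightarrow> A l \<in> null_space \<Phi>" "\<And>l. l \<in> J \<Longrightarrow> B l \<in> null_space \<Phi>"
    "\<And>i l. i \<in> J \<Longrightarrow> l \<in> J \<Longrightarrow> polar (q i) (A l) (B l) = (if i = l then 1 else 0)"
    "\<And>i l l'. i \<in> ?I \<Longrightarrow> l \<in> J \<Longrightarrow> l' \<in> J \<Longrightarrow> l \<noteq> l' \<Longrightarrow> polar (q i) (A l) (B l') = 0"
    by auto
  have AB_vec: "\<And>l. l \<in> J \<Longrightarrow> vec (A l)" "\<And>l. l \<in> J \<Longrightarrow> vec (B l)"
    using AB(1,2) null_space_vec by blast+
  define Q where "Q = q k - (\<Sum>j\<in>J. scale (polar (q k) (A j) (B j)) (q j))"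
  have "hom 2 Q" "infinite_strength 2 Q"
    unfolding Q_def using hom ics J by (auto intro: hom_diff_lin_comb infinite_strength_diff_lin_comb)
  moreover have "linear_constraints (\<Phi> \<union> polar_constraints q ?I (A ` J \<union> B ` J))"
    using \<Phi> J hom AB_vec by (intro linear_constraints_union linear_constraints_polar_constraints) auto
  ultimately obtain a b0 where ab0: "a \<in> null_space (\<Phi> \<union> polar_constraints q ?I (A ` J \<union> B ` J))"
    "b0 \<in> null_space (\<Phi> \<union> polar_constraints q ?I (A ` J \<union> B ` J))" "polar Q a b0 \<noteq> 0"
    using exists_polar_nonzero_in_null_space by blast
  define b where "b = scale (1 / polar Q a b0) b0"
  have a: "a \<in> null_space \<Phi>" "vec a" "\<And>i l. i \<in> ?I \<Longrightarrow> l \<in> J \<Longrightarrow> polar (q i) (B l) a = 0"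
    using ab0(1) by (auto simp: null_space_union null_space_polar_constraints intro: null_space_vec)
  then have a_orth: "\<And>i l. i \<in> ?I \<Longrightarrow> l \<in> J \<Longrightarrow> polar (q i) a (B l) = 0"
    by (simp add: polar_commute[of _ a])
  have b0: "b0 \<in> null_space \<Phi>" "vec b0" "\<And>i l. i \<in> ?I \<Longrightarrow> l \<in> J \<Longrightarrow> polar (q i) (A l) b0 = 0"
    using ab0(2) by (auto simp: null_space_union null_space_polar_constraints intro: null_space_vec)
  have b: "b \<in> null_space \<Phi>" "vec b" "\<And>i l. i \<in> ?I \<Longrightarrow> l \<in> J \<Longrightarrow> polar (q i) (A l) b = 0"
    using b0 \<Phi> hom AB_vec by (auto simp: b_def null_space_scale polar_scale_right)
  have Qab: "polar Q a b = 1"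
    using ab0(3) \<open>hom 2 Q\<close> a(2) b0(2) by (simp add: b_def polar_scale_right)
  have "a + (\<Sum>l\<in>J. A l) \<in> null_space \<Phi>" "b + (\<Sum>l\<in>J. scale (- polar (q l) a b) (B l)) \<in> null_space \<Phi>"
    using \<Phi> a(1) b(1) AB(1,2) by (auto intro!: null_space_add null_space_sum null_space_scale)
  moreover have "\<forall>i\<in>?I. polar (q i) (a + (\<Sum>l\<in>J. A l)) (b + (\<Sum>l\<in>J. scale (- polar (q l) a b) (B l)))
      = (if i = k then 1 else 0)"
    using polar_dual_pair_correction[OF J hom a(2) b(2) AB_vec AB(3,4) a_orth b(3)] Qab
    by (simp add: Q_def)
  ultimately show ?thesis
    by blast
qed

theorem exists_dual_pair:
  fixes q :: "'a \<Rightarrow> ('i,'k::alg_closed_field) fpoly"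
  assumes "finite I" "infinite_collective_strength_on 2 I q" "\<And>i. i \<in> I \<Longrightarrow> hom 2 (q i)"
    and "linear_constraints \<Phi>" "k \<in> I"
  shows "\<exists>a\<in>null_space \<Phi>. \<exists>b\<in>null_space \<Phi>. \<forall>i\<in>I. polar (q i) a b = (if i = k then 1 else 0)"
  using assms
proof (induction "card I" arbitrary: I \<Phi> k rule: less_induct)
  case less
  define J where "J = I - {k}"
  have J: "finite J" "k \<notin> J" "I = insert k J" "card J < card I"
    using less.prems(1,5) card_Diff1_less[OF less.prems(1,5)] by (auto simp: J_def)
  have "\<exists>a\<in>null_space \<Psi>. \<exists>b\<in>null_space \<Psi>. \<forall>i\<in>J. polar (q i) a b = (if i = l then 1 else 0)"
    if "linear_constraints \<Psi>" "l \<in> J" for \<Psi> l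
    using less.hyps[OF J(4) J(1) _ _ that] less.prems(1-3) infinite_collective_strength_on_subset[of 2 I q J]
    by (auto simp: J_def)
  then show ?case
    using exists_dual_pair_step[OF J(1,2)] less.prems unfolding J(3) by blast
qed

lemma exists_isotropic_dual_pair:
  fixes q :: "'a \<Rightarrow> ('i,'k::alg_closed_field) fpoly"
  assumes I: "finite I" "infinite_collective_strength_on 2 I q" "\<And>i. i \<in> I \<Longrightarrow> hom 2 (q i)"
    and \<Phi>: "linear_constraints \<Phi>" and k: "k \<in> I"
  shows "\<exists>e\<in>null_space \<Phi>. \<exists>h\<in>null_space \<Phi>. \<forall>i\<in>I.
           peval (q i) e = 0 \<and> peval (q i) h = 0 \<and> polar (q i) e h = (if i = k then 1 else 0)"
proof -
  obtain a b where ab: "a \<in> null_space \<Phi>" "b \<in> null_space \<Phi>"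
    "\<And>i. i \<in> I \<Longrightarrow> polar (q i) a b = (if i = k then 1 else 0)"
    using exists_dual_pair[OF I \<Phi> k] by blast
  have ab_vec: "vec a" "vec b"
    using ab(1,2) null_space_vec by blast+
  define \<Psi>\<^sub>1 where "\<Psi>\<^sub>1 = \<Phi> \<union> polar_constraints q I {a, b}"
  have "linear_constraints \<Psi>\<^sub>1"
    unfolding \<Psi>\<^sub>1_def using \<Phi> I ab_vec by (intro linear_constraints_union linear_constraints_polar_constraints) auto
  then obtain z\<^sub>1 where z\<^sub>1: "z\<^sub>1 \<in> null_space \<Psi>\<^sub>1" "\<And>i. i \<in> I \<Longrightarrow> peval (q i) z\<^sub>1 = - peval (q i) a"
    using exists_quadratic_values_in_null_space[OF I, where b = "\<lambda>i. - peval (q i) a"] by blast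
  define \<Psi>\<^sub>2 where "\<Psi>\<^sub>2 = \<Psi>\<^sub>1 \<union> polar_constraints q I {z\<^sub>1}"
  have "linear_constraints \<Psi>\<^sub>2"
    unfolding \<Psi>\<^sub>2_def using \<open>linear_constraints \<Psi>\<^sub>1\<close> I z\<^sub>1(1)
    by (intro linear_constraints_union linear_constraints_polar_constraints) (auto intro: null_space_vec)
  then obtain z\<^sub>2 where z\<^sub>2: "z\<^sub>2 \<in> null_space \<Psi>\<^sub>2" "\<And>i. i \<in> I \<Longrightarrow> peval (q i) z\<^sub>2 = - peval (q i) b"
    using exists_quadratic_values_in_null_space[OF I, where b = "\<lambda>i. - peval (q i) b"] by blast
  have z_vec: "vec z\<^sub>1" "vec z\<^sub>2"
    using z\<^sub>1(1) z\<^sub>2(1) null_space_vec by blast+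
  have orth: "polar (q i) a z\<^sub>1 = 0" "polar (q i) b z\<^sub>1 = 0" "polar (q i) a z\<^sub>2 = 0"
    "polar (q i) z\<^sub>1 b = 0" "polar (q i) z\<^sub>1 z\<^sub>2 = 0" "polar (q i) b z\<^sub>2 = 0" if "i \<in> I" for i
    using z\<^sub>1(1) z\<^sub>2(1) that
    by (auto simp: \<Psi>\<^sub>1_def \<Psi>\<^sub>2_def null_space_union null_space_polar_constraints polar_commute[of _ z\<^sub>1])
  have "a + z\<^sub>1 \<in> null_space \<Phi>" "b + z\<^sub>2 \<in> null_space \<Phi>"
    using \<Phi> ab z\<^sub>1(1) z\<^sub>2(1) by (auto simp: \<Psi>\<^sub>1_def \<Psi>\<^sub>2_def null_space_union intro: null_space_add)
  moreover have "peval (q i) (a + z\<^sub>1) = 0" "peval (q i) (b + z\<^sub>2) = 0" if "i \<in> I" for i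
    using orth[OF that] z\<^sub>1(2)[OF that] z\<^sub>2(2)[OF that] by (simp_all add: peval_add_eq_polar)
  moreover have "polar (q i) (a + z\<^sub>1) (b + z\<^sub>2) = (if i = k then 1 else 0)" if "i \<in> I" for i
    using orth[OF that] ab_vec z_vec ab(3)[OF that]
    by (simp add: polar_add_left[OF I(3)[OF that]] polar_add_right[OF I(3)[OF that]])
  ultimately show ?thesis
    by blast
qed

theorem exists_isotropic_dual_family:
  fixes q :: "'a \<Rightarrow> ('i,'k::alg_closed_field) fpoly"
  assumes I: "finite I" "infinite_collective_strength_on 2 I q" "\<And>i. i \<in> I \<Longrightarrow> hom 2 (q i)"
    and \<Phi>: "linear_constraints \<Phi>"
  shows "\<exists>E H. \<forall>k\<in>I. E k \<in> null_space \<Phi> \<and> H k \<in> null_space \<Phi>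
     \<and> (\<forall>i\<in>I. peval (q i) (E k) = 0 \<and> peval (q i) (H k) = 0 \<and> polar (q i) (E k) (H k) = (if i = k then 1 else 0))
     \<and> (\<forall>k'\<in>I. k' \<noteq> k \<longrightarrow> (\<forall>i\<in>I. polar (q i) (E k) (E k') = 0 \<and> polar (q i) (E k) (H k') = 0
                                      \<and> polar (q i) (H k) (H k') = 0))"
proof -
  obtain X :: "'a \<Rightarrow> bool \<Rightarrow> 'i \<Rightarrow> 'k" where X: "\<forall>k\<in>I. (\<forall>j\<in>UNIV. X k j \<in> null_space \<Phi>)
      \<and> (\<forall>i\<in>I. peval (q i) (X k True) = 0 \<and> peval (q i) (X k False) = 0
                 \<and> polar (q i) (X k True) (X k False) = (if i = k then 1 else 0))
      \<and> (\<forall>k'\<in>I. k' \<noteq> k \<longrightarrow> (\<forall>i\<in>I. \<forall>j\<in>UNIV. \<forall>j'\<in>UNIV. polar (q i) (X k j) (X k' j') = 0))"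
  proof (atomize_elim, rule exists_polar_orthogonal_family[OF I(1,3) \<Phi> finite_UNIV I(1)])
    fix k and \<Psi> :: "(('i \<Rightarrow> 'k) \<Rightarrow> 'k) set" assume "k \<in> I" "linear_constraints \<Psi>"
    then obtain e h where "e \<in> null_space \<Psi>" "h \<in> null_space \<Psi>"
      "\<forall>i\<in>I. peval (q i) e = 0 \<and> peval (q i) h = 0 \<and> polar (q i) e h = (if i = k then 1 else 0)"
      using exists_isotropic_dual_pair[OF I] by blast
    then show "\<exists>x. (\<forall>j\<in>UNIV. x j \<in> null_space \<Psi>) \<and> (\<forall>i\<in>I. peval (q i) (x True) = 0
        \<and> peval (q i) (x False) = 0 \<and> polar (q i) (x True) (x False) = (if i = k then 1 else 0))"
      by (intro exI[of _ "\<lambda>j. if j then e else h"]) simp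
  qed
  then show ?thesis
    by (intro exI[of _ "\<lambda>k. X k True"] exI[of _ "\<lambda>k. X k False"]) simp
qed

section \<open>Cubic forms\<close>

definition polar3 :: "('i,'k::comm_ring_1) fpoly \<Rightarrow> ('i \<Rightarrow> 'k) \<Rightarrow> ('i \<Rightarrow> 'k) \<Rightarrow> ('i \<Rightarrow> 'k) \<Rightarrow> 'k" where
  "polar3 f x y z = peval f (x + y + z) - peval f (x + y) - peval f (x + z) - peval f (y + z)
                    + peval f x + peval f y + peval f z"

lemma polar3_swap: "polar3 f x y z = polar3 f z y x"
  by (simp add: polar3_def ac_simps)

lemma polar3_zero_middle: "hom (Suc n) f \<Longrightarrow> polar3 f x 0 z = 0"
  by (simp add: polar3_def peval_at_zero)

lemma size_3_mset:
  assumes "size m = 3"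
  shows "\<exists>i j l. m = {#i, j, l#}"
proof -
  obtain i m' where "m = m' + {#i#}" "size m' = 2"
    using assms size_eq_Suc_imp_eq_union[of m 2] by (auto simp: numeral_3_eq_3)
  moreover obtain j l where "m' = {#j, l#}"
    using size_2_mset[OF \<open>size m' = 2\<close>] by blast
  ultimately show ?thesis
    by auto
qed

definition polar3_monomial :: "'i multiset \<Rightarrow> ('i \<Rightarrow> 'k::comm_ring_1) \<Rightarrow> ('i \<Rightarrow> 'k) \<Rightarrow> ('i \<Rightarrow> 'k) \<Rightarrow> 'k" where
  "polar3_monomial m x y z = (\<Prod>a\<in>#m. (x + y + z) a) - (\<Prod>a\<in>#m. (x + y) a) - (\<Prod>a\<in>#m. (x + z) a)
     - (\<Prod>a\<in>#m. (y + z) a) + (\<Prod>a\<in>#m. x a) + (\<Prod>a\<in>#m. y a) + (\<Prod>a\<in>#m. z a)"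

lemma polar3_monomial_triple:
  "polar3_monomial {#i, j, l#} x y z
     = x i * y j * z l + x i * z j * y l + y i * x j * z l + y i * z j * x l + z i * x j * y l + z i * y j * x l"
  by (simp add: polar3_monomial_def plus_fun_apply algebra_simps)

lemma polar3_eq_sum:
  fixes f :: "('i,'k::comm_ring_1) fpoly"
  assumes "hom 3 f" "finite S" "supp x \<subseteq> S" "supp y \<subseteq> S" "supp z \<subseteq> S"
  shows "polar3 f x y z = (\<Sum>m\<in>multisets_of_size S 3. f m * polar3_monomial m x y z)"
proof -
  have "supp (x + y + z) \<subseteq> S" "supp (x + y) \<subseteq> S" "supp (x + z) \<subseteq> S" "supp (y + z) \<subseteq> S"
    using assms(3-5) supp_add[of "x + y" z] supp_add[of x y] supp_add[of x z] supp_add[of y z] by blast+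
  then show ?thesis
    using assms by (simp add: polar3_def polar3_monomial_def peval_eq_sum sum_subtractf sum.distrib algebra_simps)
qed

lemma linear_functional_polar3:
  fixes f :: "('i,'k::comm_ring_1) fpoly"
  assumes f: "hom 3 f" and y: "vec y" and z: "vec z"
  shows "linear_functional (\<lambda>x. polar3 f x y z)"
proof -
  have lin: "polar3_monomial m (x + x') y z = polar3_monomial m x y z + polar3_monomial m x' y z"
    "polar3_monomial m (scale a x) y z = a * polar3_monomial m x y z"
    if "m \<in> multisets_of_size S 3" for S m x x' a
  proof -
    have "size m = 3"
      using that by (simp add: multisets_of_size_def)
    then obtain i j l where m: "m = {#i, j, l#}"
      using size_3_mset by blast
    show "polar3_monomial m (x + x') y z = polar3_monomial m x y z + polar3_monomial m x' y z"
      "polar3_monomial m (scale a x) y z = a * polar3_monomial m x y z"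
      unfolding m polar3_monomial_triple by (simp_all add: plus_fun_apply scale_apply algebra_simps)
  qed
  show ?thesis
  proof (rule linear_functionalI)
    fix x x' :: "'i \<Rightarrow> 'k" assume "vec x" "vec x'"
    define S where "S = supp x \<union> supp x' \<union> supp y \<union> supp z"
    have S: "finite S" "supp x \<subseteq> S" "supp x' \<subseteq> S" "supp y \<subseteq> S" "supp z \<subseteq> S" "supp (x + x') \<subseteq> S"
      using y z \<open>vec x\<close> \<open>vec x'\<close> supp_add[of x x'] by (auto simp: S_def vec_iff_finite_supp)
    have "polar3 f (x + x') y z
        = (\<Sum>m\<in>multisets_of_size S 3. f m * polar3_monomial m x y z + f m * polar3_monomial m x' y z)"
      unfolding polar3_eq_sum[OF f S(1,6,4,5)] by (intro sum.cong refl) (simp add: lin distrib_left)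
    then show "polar3 f (x + x') y z = polar3 f x y z + polar3 f x' y z"
      by (simp add: sum.distrib polar3_eq_sum[OF f S(1,2,4,5)] polar3_eq_sum[OF f S(1,3,4,5)])
  next
    fix a and x :: "'i \<Rightarrow> 'k" assume "vec x"
    define S where "S = supp x \<union> supp y \<union> supp z"
    have S: "finite S" "supp x \<subseteq> S" "supp y \<subseteq> S" "supp z \<subseteq> S" "supp (scale a x) \<subseteq> S"
      using y z \<open>vec x\<close> supp_scale[of a x] by (auto simp: S_def vec_iff_finite_supp)
    have "polar3 f (scale a x) y z = (\<Sum>m\<in>multisets_of_size S 3. a * (f m * polar3_monomial m x y z))"
      unfolding polar3_eq_sum[OF f S(1,5,3,4)] by (intro sum.cong refl) (simp add: lin mult.left_commute)
    then show "polar3 f (scale a x) y z = a * polar3 f x y z"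
      by (simp add: sum_distrib_left polar3_eq_sum[OF f S(1,2,3,4)])
  qed
qed

lemma linear_functional_polar3_right:
  "hom 3 f \<Longrightarrow> vec x \<Longrightarrow> vec y \<Longrightarrow> linear_functional (\<lambda>z. polar3 f x y z)"
  using linear_functional_polar3[of f y x] by (simp add: polar3_swap[of f x])

text \<open>The coefficient of \<open>\<mu>\<^sup>3\<close> collects the monomials of \<open>x\<close> alone and the mixed products of one
  coordinate each of \<open>\<mu> x\<close>, \<open>\<mu>\<^sup>2 y\<close> and \<open>z\<close>.\<close>

lemma cubic_along_parabola:
  fixes f :: "('i,'k::comm_ring_1) fpoly"
  assumes f: "hom 3 f" and vecs: "vec x" "vec y" "vec z"
  shows "\<exists>p. (\<forall>\<mu>. poly p \<mu> = peval f (scale \<mu> x + scale (\<mu>\<^sup>2) y + z))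
             \<and> coeff p 3 = peval f x + polar3 f x y z"
proof -
  define S where "S = supp x \<union> supp y \<union> supp z"
  have S: "finite S" "supp x \<subseteq> S" "supp y \<subseteq> S" "supp z \<subseteq> S"
    using vecs by (auto simp: S_def vec_iff_finite_supp)
  define M where "M = multisets_of_size S 3"
  define p where "p = (\<Sum>m\<in>M. smult (f m) (\<Prod>i\<in>#m. [:z i, x i, y i:]))"
  have "poly p \<mu> = peval f (scale \<mu> x + scale (\<mu>\<^sup>2) y + z)" for \<mu>
  proof -
    have "supp (scale \<mu> x + scale (\<mu>\<^sup>2) y + z) \<subseteq> S"
      using S supp_add[of "scale \<mu> x + scale (\<mu>\<^sup>2) y" z] supp_add[of "scale \<mu> x" "scale (\<mu>\<^sup>2) y"]
        supp_scale[of \<mu> x] supp_scale[of "\<mu>\<^sup>2" y] by blast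
    moreover have "(\<Prod>i\<in>#m. poly [:z i, x i, y i:] \<mu>) = (\<Prod>i\<in>#m. (scale \<mu> x + scale (\<mu>\<^sup>2) y + z) i)" for m
      by (intro arg_cong[where f = prod_mset] image_mset_cong)
        (simp add: plus_fun_apply scale_apply algebra_simps power2_eq_square)
    ultimately show ?thesis
      by (simp add: p_def M_def poly_sum poly_prod_mset peval_eq_sum[OF f S(1)])
  qed
  moreover have "coeff p 3 = peval f x + polar3 f x y z"
  proof -
    have "coeff (\<Prod>i\<in>#m. [:z i, x i, y i:]) 3 = (\<Prod>i\<in>#m. x i) + polar3_monomial m x y z" if "m \<in> M" for m
    proof -
      have "size m = 3"
        using that by (simp add: M_def multisets_of_size_def)
      then obtain i j l where m: "m = {#i, j, l#}"
        using size_3_mset by blast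
      show ?thesis
        unfolding m polar3_monomial_triple by (simp add: coeff_mult numeral_3_eq_3 algebra_simps)
    qed
    then have "coeff p 3 = (\<Sum>m\<in>M. f m * (\<Prod>i\<in>#m. x i) + f m * polar3_monomial m x y z)"
      by (simp add: p_def coeff_sum distrib_left)
    then show ?thesis
      by (simp add: sum.distrib M_def peval_eq_sum[OF f S(1,2)] polar3_eq_sum[OF f S])
  qed
  ultimately show ?thesis
    by blast
qed

lemma exists_nonzero_nonroot:
  fixes p :: "'k::idom poly"
  assumes "infinite (UNIV :: 'k set)" "p \<noteq> 0"
  shows "\<exists>\<mu>. \<mu> \<noteq> 0 \<and> poly p \<mu> \<noteq> 0"
  using poly_eq_0_if_roots_cofinite[OF assms(1)] assms(2) by blast

lemma peval_hyperbolic_correction: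
  fixes q :: "'a \<Rightarrow> ('i,'k::field) fpoly"
  assumes I: "finite I" "i \<in> I" and Q: "hom 2 (q i)"
    and vecs: "vec e" "vec w" "\<And>k. k \<in> I \<Longrightarrow> vec (H k)"
    and e: "peval (q i) e = 0" "\<And>k. k \<in> I \<Longrightarrow> polar (q i) e (H k) = (if i = k then 1 else 0)"
    and H: "\<And>k. k \<in> I \<Longrightarrow> peval (q i) (H k) = 0" "\<And>k k'. k \<in> I \<Longrightarrow> k' \<in> I \<Longrightarrow> k \<noteq> k' \<Longrightarrow> polar (q i) (H k) (H k') = 0"
    and w: "polar (q i) w e = 0" "\<And>k. k \<in> I \<Longrightarrow> polar (q i) w (H k) = 0"
    and \<mu>: "\<mu> \<noteq> 0"
  shows "peval (q i) (w + scale \<mu> e + scale (1 / \<mu>) (\<Sum>k\<in>I. scale (- peval (q k) w) (H k))) = 0"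
proof -
  define D where "D = (\<Sum>k\<in>I. scale (- peval (q k) w) (H k))"
  have D: "vec D"
    unfolding D_def using vecs(3) by simp
  have qD: "peval (q i) D = 0"
    unfolding D_def using I(1) vecs(3) H
    by (simp add: peval_sum_orthogonal[OF Q] polar_scale_left[OF Q] polar_scale_right[OF Q]
        peval_scale_quadratic[OF Q])
  have "polar (q i) (w + scale \<mu> e) D = (\<Sum>k\<in>I. - peval (q k) w * (\<mu> * (if i = k then 1 else 0)))"
    unfolding D_def using vecs w(2) e(2)
    by (simp add: polar_sum_right[OF Q] polar_scale_right[OF Q] polar_add_left[OF Q] polar_scale_left[OF Q])
  also have "\<dots> = (\<Sum>k\<in>I. if k = i then - \<mu> * peval (q i) w else 0)"
    by (intro sum.cong) auto
  also have "\<dots> = - \<mu> * peval (q i) w"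
    using I by simp
  finally have "polar (q i) (w + scale \<mu> e) D = - \<mu> * peval (q i) w" .
  moreover have "peval (q i) (w + scale \<mu> e) = peval (q i) w"
    using vecs w(1) e(1) by (simp add: peval_add_eq_polar polar_scale_right[OF Q] peval_scale_quadratic[OF Q])
  ultimately show ?thesis
    using \<mu> vecs D qD
    by (simp add: D_def[symmetric] peval_add_eq_polar polar_scale_right[OF Q] peval_scale_quadratic[OF Q])
qed

text \<open>Given \<open>e\<close> and \<open>H\<^sub>k\<close> spanning hyperbolic planes for all \<open>q\<^sub>i\<close>, and \<open>w\<close> orthogonal to them with
  \<open>f(w) \<noteq> 0\<close>, the vector \<open>g = w + \<mu> e - \<mu>\<^sup>-\<^sup>1 \<Sum>\<^sub>k q\<^sub>k(w) H\<^sub>k\<close> is isotropic for every \<open>q\<^sub>i\<close>, and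
  \<open>f(\<mu> g)\<close> is a polynomial in \<open>\<mu>\<close> with leading coefficient \<open>f(w)\<close>, so \<open>f(g) \<noteq> 0\<close> for suitable \<open>\<mu>\<close>.\<close>

lemma exists_isotropic_cubic_nonzero_from_witness:
  fixes q :: "'a \<Rightarrow> ('i,'k::field) fpoly" and f :: "('i,'k) fpoly"
  assumes inf: "infinite (UNIV :: 'k set)"
    and I: "finite I" "\<And>i. i \<in> I \<Longrightarrow> hom 2 (q i)" and f: "hom 3 f" and \<Phi>: "linear_constraints \<Phi>"
    and e: "e \<in> null_space \<Phi>" "\<And>i. i \<in> I \<Longrightarrow> peval (q i) e = 0"
      "\<And>i k. i \<in> I \<Longrightarrow> k \<in> I \<Longrightarrow> polar (q i) e (H k) = (if i = k then 1 else 0)"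
    and H: "\<And>k. k \<in> I \<Longrightarrow> H k \<in> null_space \<Phi>" "\<And>i k. i \<in> I \<Longrightarrow> k \<in> I \<Longrightarrow> peval (q i) (H k) = 0"
      "\<And>i k k'. i \<in> I \<Longrightarrow> k \<in> I \<Longrightarrow> k' \<in> I \<Longrightarrow> k \<noteq> k' \<Longrightarrow> polar (q i) (H k) (H k') = 0"
    and w: "w \<in> null_space \<Phi>" "\<And>i. i \<in> I \<Longrightarrow> polar (q i) w e = 0"
      "\<And>i k. i \<in> I \<Longrightarrow> k \<in> I \<Longrightarrow> polar (q i) w (H k) = 0"
      "\<And>k. k \<in> I \<Longrightarrow> polar3 f w e (H k) = 0" "peval f w \<noteq> 0"
  shows "\<exists>g\<in>null_space \<Phi>. (\<forall>i\<in>I. peval (q i) g = 0) \<and> peval f g \<noteq> 0"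
proof -
  have vecs: "vec e" "vec w" "\<And>k. k \<in> I \<Longrightarrow> vec (H k)"
    using e(1) w(1) H(1) null_space_vec by blast+
  define D where "D = (\<Sum>k\<in>I. scale (- peval (q k) w) (H k))"
  have D: "D \<in> null_space \<Phi>" "vec D"
    unfolding D_def using \<Phi> H(1) vecs(3) by (auto intro: null_space_sum null_space_scale)
  have "polar3 f w e D = (\<Sum>k\<in>I. - peval (q k) w * polar3 f w e (H k))"
    unfolding D_def using linear_functional_polar3_right[OF f vecs(2,1)] vecs(3)
    by (simp add: linear_functional_sum linear_functional_scale)
  then have "polar3 f w e D = 0"
    using w(4) by simp
  then obtain p where p: "\<And>\<mu>. poly p \<mu> = peval f (scale \<mu> w + scale (\<mu>\<^sup>2) e + D)" "coeff p 3 = peval f w"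
    using cubic_along_parabola[OF f vecs(2,1) D(2)] by auto
  then obtain \<mu> where \<mu>: "\<mu> \<noteq> 0" "poly p \<mu> \<noteq> 0"
    using exists_nonzero_nonroot[OF inf, of p] w(5) by fastforce
  define g where "g = w + scale \<mu> e + scale (1 / \<mu>) D"
  have g_vec: "vec g"
    using vecs D by (simp add: g_def)
  have "scale \<mu> g = scale \<mu> w + scale (\<mu>\<^sup>2) e + D"
    using \<mu>(1) by (simp add: g_def fun_eq_iff plus_fun_apply scale_apply algebra_simps power2_eq_square)
  then have "\<mu> ^ 3 * peval f g \<noteq> 0"
    using p(1) \<mu>(2) peval_homogeneous[OF f g_vec] by metis
  moreover have "peval (q i) g = 0" if "i \<in> I" for i
    unfolding g_def D_def using that I vecs e H w \<mu>(1) by (intro peval_hyperbolic_correction) auto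
  moreover have "g \<in> null_space \<Phi>"
    unfolding g_def using \<Phi> e(1) w(1) D(1) by (intro null_space_add null_space_scale)
  ultimately show ?thesis
    by auto
qed

lemma exists_isotropic_cubic_nonzero:
  fixes q :: "'a \<Rightarrow> ('i,'k::alg_closed_field) fpoly" and f :: "('i,'k) fpoly"
  assumes I: "finite I" "infinite_collective_strength_on 2 I q" "\<And>i. i \<in> I \<Longrightarrow> hom 2 (q i)"
    and \<Phi>: "linear_constraints \<Phi>" and f: "hom 3 f" "infinite_strength 3 f"
  shows "\<exists>g\<in>null_space \<Phi>. (\<forall>i\<in>I. peval (q i) g = 0) \<and> peval f g \<noteq> 0"
proof -
  obtain E H where EH: "\<forall>k\<in>I. E k \<in> null_space \<Phi> \<and> H k \<in> null_space \<Phi>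
     \<and> (\<forall>i\<in>I. peval (q i) (E k) = 0 \<and> peval (q i) (H k) = 0 \<and> polar (q i) (E k) (H k) = (if i = k then 1 else 0))
     \<and> (\<forall>k'\<in>I. k' \<noteq> k \<longrightarrow> (\<forall>i\<in>I. polar (q i) (E k) (E k') = 0 \<and> polar (q i) (E k) (H k') = 0
                                      \<and> polar (q i) (H k) (H k') = 0))"
    using exists_isotropic_dual_family[OF I \<Phi>] by blast
  have EH_vec: "\<And>k. k \<in> I \<Longrightarrow> vec (E k)" "\<And>k. k \<in> I \<Longrightarrow> vec (H k)"
    using EH null_space_vec by blast+
  define e where "e = (\<Sum>k\<in>I. E k)"
  have e: "e \<in> null_space \<Phi>"
    unfolding e_def using \<Phi> EH by (auto intro: null_space_sum)
  have qe: "peval (q i) e = 0" if "i \<in> I" for i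
    unfolding e_def using EH EH_vec that I(1) by (simp add: peval_sum_orthogonal[OF I(3)[OF that]])
  have eH: "polar (q i) e (H k) = (if i = k then 1 else 0)" if "i \<in> I" "k \<in> I" for i k
  proof -
    have "polar (q i) e (H k) = (\<Sum>l\<in>I. if l = k then polar (q i) (E k) (H k) else 0)"
      unfolding e_def using EH EH_vec that by (auto simp: polar_sum_left[OF I(3)] intro: sum.cong)
    then show ?thesis
      using EH that I(1) by simp
  qed
  define \<Psi> where "\<Psi> = \<Phi> \<union> polar_constraints q I (insert e (H ` I)) \<union> (\<lambda>k x. polar3 f x e (H k)) ` I"
  have "linear_constraints \<Psi>"
    unfolding \<Psi>_def using \<Phi> I null_space_vec[OF e] EH_vec f(1)
    by (intro linear_constraints_union linear_constraints_polar_constraints linear_constraints_image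
        linear_functional_polar3) auto
  then obtain w where w: "w \<in> null_space \<Psi>" "peval f w \<noteq> 0"
    using exists_nonvanishing_in_null_space[OF infinite_UNIV_alg_closed_field _ _ f] by auto
  have w_null: "w \<in> null_space \<Phi>" and w_orth: "w \<in> null_space (polar_constraints q I (insert e (H ` I)))"
    and w_polar3: "w \<in> null_space ((\<lambda>k x. polar3 f x e (H k)) ` I)"
    using w(1) by (simp_all add: \<Psi>_def null_space_union)
  show ?thesis
  proof (rule exists_isotropic_cubic_nonzero_from_witness[OF infinite_UNIV_alg_closed_field I(1,3) f(1) \<Phi> e qe eH])
    show "H k \<in> null_space \<Phi>" "\<And>i. i \<in> I \<Longrightarrow> peval (q i) (H k) = 0" if "k \<in> I" for k
      using EH that by auto
    show "\<And>i k k'. i \<in> I \<Longrightarrow> k \<in> I \<Longrightarrow> k' \<in> I \<Longrightarrow> k \<noteq> k' \<Longrightarrow> polar (q i) (H k) (H k') = 0"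
      using EH by auto
    show "polar (q i) w e = 0" "polar (q i) w (H k) = 0" if "i \<in> I" "k \<in> I" for i k
      using w_orth that by (auto simp: null_space_polar_constraints polar_commute[of _ w])
    show "polar3 f w e (H k) = 0" if "k \<in> I" for k
      using w_polar3 that by (auto simp: null_space_def)
  qed (use w_null w(2) in auto)
qed

theorem exists_cubic_and_quadratic_values:
  fixes q :: "'a \<Rightarrow> ('i,'k::alg_closed_field) fpoly" and f :: "('i,'k) fpoly"
  assumes I: "finite I" "infinite_collective_strength_on 2 I q" "\<And>i. i \<in> I \<Longrightarrow> hom 2 (q i)"
    and \<Phi>: "linear_constraints \<Phi>" and f: "hom 3 f" "infinite_strength 3 f"
  shows "\<exists>v\<in>null_space \<Phi>. peval f v = a \<and> (\<forall>i\<in>I. peval (q i) v = b i)"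
proof -
  obtain g where g: "g \<in> null_space \<Phi>" "\<And>i. i \<in> I \<Longrightarrow> peval (q i) g = 0" "peval f g \<noteq> 0"
    using exists_isotropic_cubic_nonzero[OF I \<Phi> f] by blast
  have g_vec: "vec g"
    using g(1) null_space_vec by blast
  have "linear_constraints (\<Phi> \<union> polar_constraints q I {g})"
    using \<Phi> I g_vec by (intro linear_constraints_union linear_constraints_polar_constraints) auto
  then obtain u where u: "u \<in> null_space (\<Phi> \<union> polar_constraints q I {g})" "\<And>i. i \<in> I \<Longrightarrow> peval (q i) u = b i"
    using exists_quadratic_values_in_null_space[OF I] by blast
  have u_vec: "vec u"
    using u(1) null_space_vec by blast
  have "polar3 f g 0 u = 0"
    using polar3_zero_middle[of 2 f] f(1) by (simp add: numeral_3_eq_3)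
  then obtain p where p: "\<And>s. poly p s = peval f (scale s g + scale (s\<^sup>2) 0 + u)" "coeff p 3 = peval f g"
    using cubic_along_parabola[OF f(1) g_vec vec_zero u_vec] by auto
  have "coeff (p - [:a:]) 3 \<noteq> 0"
    using p(2) g(3) by (simp add: numeral_3_eq_3)
  then have "degree (p - [:a:]) > 0"
    using le_degree[of "p - [:a:]" 3] by linarith
  then obtain s where "poly (p - [:a:]) s = 0"
    using alg_closed_imp_poly_has_root by blast
  moreover have "scale (s\<^sup>2) 0 = (0 :: 'i \<Rightarrow> 'k)"
    by (simp add: fun_eq_iff scale_apply)
  ultimately have "peval f (scale s g + u) = a"
    using p(1)[of s] by simp
  moreover have "scale s g + u \<in> null_space \<Phi>"
    using \<Phi> g(1) u(1) by (auto simp: null_space_union intro: null_space_add null_space_scale)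
  moreover have "peval (q i) (scale s g + u) = b i" if "i \<in> I" for i
  proof -
    have "polar (q i) g u = 0"
      using u(1) that by (auto simp: null_space_union null_space_polar_constraints)
    then show ?thesis
      using g(2)[OF that] u(2)[OF that] g_vec u_vec
      by (simp add: peval_add_eq_polar polar_scale_left[OF I(3)[OF that]] peval_scale_quadratic[OF I(3)[OF that]])
  qed
  ultimately show ?thesis
    by blast
qed

lemma finite_strength_quadratic_vanishes_on_null_space:
  fixes F :: "('i,'k::comm_ring_1) fpoly"
  assumes "finite_strength 2 F"
  shows "\<exists>\<Phi>. linear_constraints \<Phi> \<and> (\<forall>v\<in>null_space \<Phi>. peval F v = 0)"
proof -
  obtain s :: nat and g h :: "nat \<Rightarrow> ('i,'k) fpoly" and dg dh :: "nat \<Rightarrow> nat"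
    where decomp: "\<forall>j<s. 0 < dg j \<and> dg j < 2 \<and> 0 < dh j \<and> dh j < 2 \<and> hom (dg j) (g j) \<and> hom (dh j) (h j)"
      "F = (\<lambda>m. \<Sum>j<s. pmul (g j) (h j) m)"
    using assms unfolding finite_strength_def by blast
  then have gh: "hom 1 (g j)" "hom 1 (h j)" if "j < s" for j
    using that by (metis One_nat_def less_2_cases_iff less_irrefl)+
  have F: "F = (\<Sum>j<s. pmul (g j) (h j))"
    by (simp add: decomp(2) fun_eq_iff sum_fun_apply)
  show ?thesis
  proof (intro exI conjI ballI)
    show "linear_constraints ((\<lambda>j. peval (g j)) ` {..<s})"
      using gh by (intro linear_constraints_image linear_functional_peval) auto
    fix v assume v: "v \<in> null_space ((\<lambda>j. peval (g j)) ` {..<s})"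
    then have "peval (pmul (g j) (h j)) v = 0" if "j < s" for j
      using peval_pmul[OF gh[OF that] null_space_vec[OF v]] v that by (simp add: null_space_def)
    moreover have "hom 2 (pmul (g j) (h j))" if "j < s" for j
      using hom_pmul[OF gh[OF that]] by (simp add: numeral_2_eq_2)
    moreover have "peval (\<Sum>j<s. pmul (g j) (h j)) v = (\<Sum>j<s. peval (pmul (g j) (h j)) v)"
      using v calculation(2) by (intro peval_sum) (auto intro: null_space_vec)
    ultimately show "peval F v = 0"
      by (simp add: F)
  qed
qed

theorem corollary2p2:
  fixes f :: "('i, 'k::alg_closed_field) fpoly"
    and q :: "nat \<Rightarrow> ('i, 'k) fpoly" and q' :: "nat \<Rightarrow> ('i, 'k) fpoly"
    and l :: "nat \<Rightarrow> ('i, 'k) fpoly"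
    and r s t :: nat and a :: 'k and b :: "nat \<Rightarrow> 'k"
  assumes "hom 3 f" and "infinite_strength 3 f"
    and "\<forall>i<r. hom 2 (q i)" and "infinite_collective_strength 2 r q"
    and "\<forall>i<s. hom 2 (q' i) \<and> finite_strength 2 (q' i)"
    and "\<forall>i<t. hom 1 (l i)"
  shows "\<exists>v. vec v \<and> peval f v = a \<and> (\<forall>i<r. peval (q i) v = b i)
           \<and> (\<forall>i<s. peval (q' i) v = 0) \<and> (\<forall>i<t. peval (l i) v = 0)"
proof -
  have "\<forall>i\<in>{..<s}. \<exists>\<Psi>. linear_constraints \<Psi> \<and> (\<forall>v\<in>null_space \<Psi>. peval (q' i) v = 0)"
    using finite_strength_quadratic_vanishes_on_null_space assms(5) by blast
  then obtain \<Psi> where \<Psi>: "\<forall>i\<in>{..<s}. linear_constraints (\<Psi> i) \<and> (\<forall>v\<in>null_space (\<Psi> i). peval (q' i) v = 0)"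
    by (rule bchoice[THEN exE])
  define \<Phi> where "\<Phi> = (\<Union>i<s. \<Psi> i) \<union> (\<lambda>i. peval (l i)) ` {..<t}"
  have "linear_constraints \<Phi>"
    using \<Psi> assms(6) by (auto simp: \<Phi>_def linear_constraints_def linear_functional_peval)
  then have "\<exists>v\<in>null_space \<Phi>. peval f v = a \<and> (\<forall>i\<in>{..<r}. peval (q i) v = b i)"
    using assms(3,4) by (intro exists_cubic_and_quadratic_values assms(1,2))
      (auto simp: infinite_collective_strength_iff_on_lessThan)
  then obtain v where v: "v \<in> null_space \<Phi>" "peval f v = a" "\<forall>i\<in>{..<r}. peval (q i) v = b i"
    by blast
  have "v \<in> null_space (\<Psi> i)" if "i < s" for i
    using v(1) null_space_antimono[of "\<Psi> i" \<Phi>] that by (auto simp: \<Phi>_def)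
  then show ?thesis
    using v \<Psi> by (auto simp: \<Phi>_def null_space_def)
qed

end
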